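(* For all $b\ne c$ in $[k]$, the off-diagonal $bc$ block of the population Hessian satisfies $$\nabla_{bc}\Phi(\mathbf x)=-\sum_{l\in[k]}p_l\,\mathbb E\Big\{\pi_{Y_l}(b)\pi_{Y_l}(c)\Big[\Big(\mu_l+\tfrac1\lambda\big(x^b+x^c-2\langle x^B\rangle_{\pi_{Y_l}}\big)\Big)^{\otimes2}+\tfrac1\lambda I_d-\tfrac2{\lambda^2}\langle x^B;x^B\rangle_{\pi_{Y_l}}\Big]\Big\}.$$ In particular, each such block is a shift by a multiple of the identity of a matrix of rank at most $k^2$.
   Context: Let $p_1,\dots,p_k\in(0,1)$ with $\sum_lp_l=1$, $\mu_1,\dots,\mu_k\in\mathbb R^d$ and $\lambda>0$. A data point is $(y,Y)$, $y$ one-hot in $\mathbb R^k$ with $\mathbb P(y=e_l)=p_l$, and given $y=e_l$, $Y=\mu_l+Z$ with $Z\sim\mathcal N(0,I_d/\lambda)$; write $Y_l=\mu_l+Z$. For $\mathbf x=(x^1,\dots,x^k)\in(\mathbb R^d)^k$ let $L(\mathbf x,(y,Y))=-\sum_cy_cx^c\cdot Y+\log\sum_c\exp(x^c\cdot Y)$, $\Phi(\mathbf x)=\mathbb E[L(\mathbf x,(y,Y))]$, and $\nabla_{bc}\Phi$ the $d\times d$ block $\nabla_{x^b}\nabla_{x^c}\Phi$. For $Y\in\mathbb R^d$, $\pi_Y(c)=\exp(x^c\cdot Y)/\sum_a\exp(x^a\cdot Y)$, a probability measure on $[k]$; $\langle x^B\rangle_{\pi_Y}=\sum_ax^a\pi_Y(a)$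 and $\langle x^B;x^B\rangle_{\pi_Y}=\sum_ax^a\otimes x^a\,\pi_Y(a)-\langle x^B\rangle_{\pi_Y}^{\otimes2}$. *)

theory Defs
  imports "HOL-Analysis.Analysis"
begin

text \<open>Classes are indexed by a finite type 'k (so [k] = UNIV :: 'k set, k = CARD('k)),
  space dimension by a finite type 'd (R^d = real^'d). A parameter
  x = (x^1,...,x^k) is an element of real^'d^'k, with x^c = x $ c.\<close>

definition gauss_dens :: "real \<Rightarrow> real^'d \<Rightarrow> real" where
  "gauss_dens lam z = (lam / (2 * pi)) powr (real CARD('d) / 2) * exp (- lam * (norm z)\<^sup>2 / 2)"

definition gauss_meas :: "real \<Rightarrow> (real^'d) measure" where
  "gauss_meas lam = density lborel (\<lambda>z. ennreal (gauss_dens lam z))"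

definition loss :: "real^'d^'k \<Rightarrow> real^'k \<Rightarrow> real^'d \<Rightarrow> real" where
  "loss x y Y = - (\<Sum>c\<in>UNIV. y $ c * ((x $ c) \<bullet> Y)) + ln (\<Sum>c\<in>UNIV. exp ((x $ c) \<bullet> Y))"

text \<open>Population risk Phi(x) = E[L(x,(y,Y))], y one-hot with P(y = e_l) = p_l,
  and given y = e_l, Y = mu_l + Z.\<close>
definition Phi :: "('k::finite \<Rightarrow> real) \<Rightarrow> ('k \<Rightarrow> real^'d) \<Rightarrow> real \<Rightarrow> real^'d^'k \<Rightarrow> real" where
  "Phi p mu lam x = (\<Sum>l\<in>UNIV. p l * (\<integral>z. loss x (axis l 1) (mu l + z) \<partial>gauss_meas lam))"

definition softmax :: "real^'d^'k::finite \<Rightarrow> real^'d \<Rightarrow> 'k \<Rightarrow> real" where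
  "softmax x Y c = exp ((x $ c) \<bullet> Y) / (\<Sum>a\<in>UNIV. exp ((x $ a) \<bullet> Y))"

definition outer :: "real^'d \<Rightarrow> real^'d \<Rightarrow> real^'d^'d" where
  "outer u v = (\<chi> i j. u $ i * v $ j)"

definition gibbs_mean :: "real^'d^'k::finite \<Rightarrow> real^'d \<Rightarrow> real^'d" where
  "gibbs_mean x Y = (\<Sum>a\<in>UNIV. softmax x Y a *\<^sub>R x $ a)"

definition gibbs_cov :: "real^'d^'k::finite \<Rightarrow> real^'d \<Rightarrow> real^'d^'d" where
  "gibbs_cov x Y = (\<Sum>a\<in>UNIV. softmax x Y a *\<^sub>R outer (x $ a) (x $ a))
                   - outer (gibbs_mean x Y) (gibbs_mean x Y)"

definition coord :: "'k::finite \<Rightarrow> 'd::finite \<Rightarrow> real^'d^'k" where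
  "coord b i = axis b (axis i 1)"

end

theory Submission
  imports Defs "HOL-Probability.Distributions"
begin

(* Differentiating Phi twice under the integral sign (the Gaussian weight dominates the at most
   quadratic growth of all integrands) gives, for b different from c,
     nabla_bc Phi = - sum_l p_l E[pi(b) pi(c) Y_l Y_l^T],
   since the derivative of pi(c) in the direction of x^b is - pi(b) pi(c) Y.  Gaussian integration
   by parts, E[phi(Z) Z_i] = E[d_i phi(Z)] / lambda, applied first in direction i to pi(b) pi(c) Y_j
   and then in direction j, turns this into the stated formula: the Y-gradient of log(pi(b) pi(c))
   is x^b + x^c - 2 <x^B>, and the Y-Jacobian of <x^B> is the Gibbs covariance.  Apart from the
   multiple of the identity, every integrand annihilates the vectors orthogonal to all mu_l and x^a,
   so the remaining matrix has rank at most 2k <= k^2. *)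

lemma measurable_vec_nth[measurable (raw)]:
  fixes f :: "'a \<Rightarrow> 'b::real_normed_vector^'n"
  assumes "f \<in> borel_measurable M"
  shows "(\<lambda>x. f x $ i) \<in> borel_measurable M"
  using measurable_compose[OF assms borel_measurable_continuous_onI]
    bounded_linear.continuous_on[OF bounded_linear_vec_nth continuous_on_id] by blast

lemma measurable_vec_lambda[measurable (raw)]:
  fixes f :: "'a \<Rightarrow> 'n::finite \<Rightarrow> 'b::euclidean_space"
  assumes "\<And>i. (\<lambda>x. f x i) \<in> borel_measurable M"
  shows "(\<lambda>x. \<chi> i. f x i) \<in> borel_measurable M"
  using assms by (subst borel_measurable_euclidean_space) (auto simp: Basis_vec_def inner_axis)

lemma norm_add_le_mult: "norm (m + z) \<le> (1 + norm m) * (1 + norm (z::'a::real_normed_vector))"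
proof -
  have "norm (m + z) \<le> norm m + norm z" by (rule norm_triangle_ineq)
  also have "\<dots> \<le> (1 + norm m) * (1 + norm z)" by (simp add: algebra_simps)
  finally show ?thesis .
qed

lemma abs_add_nth_le: "\<bar>(m + z) $ k\<bar> \<le> (1 + norm m) * (1 + norm (z::real^'d))"
  using component_le_norm_cart[of "m + z" k] norm_add_le_mult[of m z] by linarith

lemma abs_nth_nth_le_norm: "\<bar>x $ a $ i\<bar> \<le> norm x"
  using component_le_norm_cart[of "x $ a" i] Finite_Cartesian_Product.norm_nth_le[of x a] by linarith

lemma norm_diff_scaleR_sq:
  fixes w v :: "'a::real_inner"
  shows "(norm (w - s *\<^sub>R v))\<^sup>2 = (norm w)\<^sup>2 - 2 * s * (w \<bullet> v) + s\<^sup>2 * (norm v)\<^sup>2"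
  unfolding power2_norm_eq_inner
  by (simp add: inner_diff_left inner_diff_right inner_commute power2_eq_square algebra_simps)

lemma outer_nth: "outer u v $ i = u $ i *\<^sub>R v"
  by (simp add: outer_def vec_eq_iff)

lemma outer_mult_vec: "outer u v *v w = (v \<bullet> w) *\<^sub>R u"
  by (simp add: vec_eq_iff matrix_vector_mul_component outer_nth)

lemma norm_le_sum_abs_nth_nth: "norm (A::real^'n^'m) \<le> (\<Sum>i\<in>UNIV. \<Sum>j\<in>UNIV. \<bar>A $ i $ j\<bar>)"
proof -
  have "norm A \<le> (\<Sum>i\<in>UNIV. norm (A $ i))" by (simp add: norm_vec_def L2_set_le_sum)
  also have "\<dots> \<le> (\<Sum>i\<in>UNIV. \<Sum>j\<in>UNIV. \<bar>A $ i $ j\<bar>)" by (intro sum_mono norm_le_l1_cart)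
  finally show ?thesis .
qed

lemma integral_nth_nth:
  fixes f :: "'a \<Rightarrow> real^'n^'m"
  assumes "integrable M f"
  shows "(\<integral>z. f z \<partial>M) $ i $ j = (\<integral>z. f z $ i $ j \<partial>M)"
  using integral_bounded_linear[OF bounded_linear_compose[OF bounded_linear_vec_nth bounded_linear_vec_nth] assms]
  by simp

lemma bounded_linear_mult_vec_left: "bounded_linear (\<lambda>A::real^'n^'m. A *v w)"
proof -
  have "linear (\<lambda>A::real^'n^'m. A *v w)"
    by (rule linearI) (simp_all add: matrix_vector_mult_add_rdistrib scaleR_matrix_vector_assoc[symmetric])
  then show ?thesis by (simp add: linear_conv_bounded_linear)
qed

lemma integral_mult_vec:
  fixes f :: "'a \<Rightarrow> real^'n^'m"
  assumes "integrable M f"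
  shows "(\<integral>z. f z \<partial>M) *v w = (\<integral>z. f z *v w \<partial>M)"
  using integral_bounded_linear[OF bounded_linear_mult_vec_left assms] by simp

lemma rank_le_card_if_orthogonal_in_null_space:
  fixes M :: "real^'n^'m" and S :: "(real^'n) set"
  assumes "finite S" and null: "\<And>w. (\<And>s. s \<in> S \<Longrightarrow> s \<bullet> w = 0) \<Longrightarrow> M *v w = 0"
  shows "rank M \<le> card S"
proof -
  have "range (\<lambda>v. M *v v) \<subseteq> (\<lambda>v. M *v v) ` span S"
  proof clarify
    fix v
    obtain y z where y: "y \<in> span S" and z: "\<And>w. w \<in> span S \<Longrightarrow> orthogonal z w" and v: "v = y + z"
      using orthogonal_subspace_decomp_exists[of S v] by blast
    have "M *v z = 0"
      using z by (intro null) (simp add: orthogonal_def inner_commute span_base)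
    then have "M *v v = M *v y" by (simp add: v matrix_vector_right_distrib)
    then show "M *v v \<in> (\<lambda>v. M *v v) ` span S" using y by blast
  qed
  then have "rank M \<le> dim ((\<lambda>v. M *v v) ` span S)" by (simp add: rank_dim_range dim_subset)
  also have "\<dots> \<le> dim (span S)" by (rule dim_image_le) simp
  also have "\<dots> \<le> card S" using assms(1) by (intro dim_le_card) auto
  finally show ?thesis .
qed

lemma integrable_exp_neg_norm_sq:
  fixes a :: real
  assumes "a > 0"
  shows "integrable lborel (\<lambda>z::'a::euclidean_space. exp (- a * (norm z)\<^sup>2))"
proof (unfold integrable_iff_bounded, intro conjI)
  show "(\<lambda>z::'a. exp (- a * (norm z)\<^sup>2)) \<in> borel_measurable lborel" by measurable
  have integrable_1d: "integrable lborel (\<lambda>s::real. exp (- a * s\<^sup>2))"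
  proof -
    define \<sigma> where "\<sigma> = sqrt (1 / (2 * a))"
    have "\<sigma> > 0" "\<sigma>\<^sup>2 = 1 / (2 * a)" using assms by (simp_all add: \<sigma>_def)
    then have "exp (- a * s\<^sup>2) = sqrt (2 * pi * \<sigma>\<^sup>2) * normal_density 0 \<sigma> s" for s
      using assms by (simp add: normal_density_def)
    then show ?thesis using \<open>\<sigma> > 0\<close> by (simp add: integrable_mult_right)
  qed
  have "(\<integral>\<^sup>+ z. ennreal (norm (exp (- a * (norm (z::'a))\<^sup>2))) \<partial>lborel)
      = (\<integral>\<^sup>+ z. (\<Prod>b\<in>Basis. ennreal (exp (- a * ((z::'a) \<bullet> b)\<^sup>2))) \<partial>lborel)"
  proof (intro nn_integral_cong)
    fix z :: 'a
    have "(norm z)\<^sup>2 = (\<Sum>b\<in>Basis. (z \<bullet> b)\<^sup>2)"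
      unfolding power2_norm_eq_inner by (subst euclidean_inner) (simp add: power2_eq_square)
    then have "exp (- a * (norm z)\<^sup>2) = (\<Prod>b\<in>Basis. exp (- a * (z \<bullet> b)\<^sup>2))"
      by (simp add: sum_distrib_left exp_sum[symmetric] sum_negf)
    then show "ennreal (norm (exp (- a * (norm z)\<^sup>2))) = (\<Prod>b\<in>Basis. ennreal (exp (- a * (z \<bullet> b)\<^sup>2)))"
      by (simp add: prod_ennreal prod_nonneg)
  qed
  also have "\<dots> = (\<Prod>b\<in>(Basis::'a set). \<integral>\<^sup>+ s. ennreal (exp (- a * s\<^sup>2)) \<partial>lborel)"
    by (rule nn_integral_lborel_prod) auto
  also have "\<dots> < \<infinity>"
    using integrable_1d
    by (simp add: less_top[symmetric] ennreal_prod_eq_top integrable_iff_bounded power_eq_top_ennreal)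
  finally show "(\<integral>\<^sup>+ z. ennreal (norm (exp (- a * (norm (z::'a))\<^sup>2))) \<partial>lborel) < \<infinity>" .
qed

lemma integrable_quadratic_exp_neg_norm_sq:
  fixes a :: real
  assumes a: "a > 0"
  shows "integrable lborel (\<lambda>z::'a::euclidean_space. (1 + norm z)\<^sup>2 * exp (- a * (norm z)\<^sup>2))"
proof (rule Bochner_Integration.integrable_bound)
  let ?G = "\<lambda>z::'a. 2 * exp (- a * (norm z)\<^sup>2) + (4 / a) * exp (- (a / 2) * (norm z)\<^sup>2)"
  show "integrable lborel ?G"
    using a by (intro Bochner_Integration.integrable_add integrable_mult_right integrable_exp_neg_norm_sq) auto
  show "(\<lambda>z::'a. (1 + norm z)\<^sup>2 * exp (- a * (norm z)\<^sup>2)) \<in> borel_measurable lborel" by measurable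
  have "(1 + s)\<^sup>2 * exp (- a * s\<^sup>2) \<le> 2 * exp (- a * s\<^sup>2) + (4 / a) * exp (- (a / 2) * s\<^sup>2)" for s :: real
  proof -
    have "s\<^sup>2 \<le> (2 / a) * exp ((a / 2) * s\<^sup>2)"
      using exp_ge_add_one_self[of "(a / 2) * s\<^sup>2"] a by (simp add: field_simps)
    then have "s\<^sup>2 * exp (- a * s\<^sup>2) \<le> (2 / a) * exp ((a / 2) * s\<^sup>2) * exp (- a * s\<^sup>2)"
      by (intro mult_right_mono) auto
    also have "\<dots> = (2 / a) * exp (- (a / 2) * s\<^sup>2)"
      by (simp add: mult.assoc exp_add[symmetric])
    finally have "s\<^sup>2 * exp (- a * s\<^sup>2) \<le> (2 / a) * exp (- (a / 2) * s\<^sup>2)" .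
    moreover have "(1 + s)\<^sup>2 \<le> 2 + 2 * s\<^sup>2"
      using sum_squares_ge_zero[of "s - 1" 0] by (simp add: power2_eq_square algebra_simps)
    then have "(1 + s)\<^sup>2 * exp (- a * s\<^sup>2) \<le> (2 + 2 * s\<^sup>2) * exp (- a * s\<^sup>2)"
      by (intro mult_right_mono) auto
    ultimately show ?thesis by (simp add: algebra_simps)
  qed
  moreover have "?G z \<ge> 0" for z using a by simp
  ultimately show "AE z in lborel. norm ((1 + norm z)\<^sup>2 * exp (- a * (norm z)\<^sup>2)) \<le> norm (?G z)"
    by (intro AE_I2) (simp add: abs_mult)
qed

lemma gauss_dens_nonneg: "0 \<le> gauss_dens lam z"
  unfolding gauss_dens_def by simp

lemma borel_measurable_gauss_dens[measurable]: "gauss_dens lam \<in> borel_measurable borel"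
  unfolding gauss_dens_def[abs_def] by measurable

lemma sets_gauss_meas[measurable_cong]: "sets (gauss_meas lam) = sets borel"
  by (simp add: gauss_meas_def)

lemma integrable_gauss_meas:
  fixes f :: "real^'d \<Rightarrow> 'b::{banach, second_countable_topology}"
  assumes lam: "lam > 0" and [measurable]: "f \<in> borel_measurable borel" and "n \<le> 2"
    and bound: "\<And>z. norm (f z) \<le> C * (1 + norm z) ^ n"
  shows "integrable (gauss_meas lam) f"
proof -
  have "C \<ge> 0" using order_trans[OF norm_ge_zero bound[of 0]] by simp
  have quadratic: "norm (f z) \<le> C * (1 + norm z)\<^sup>2" for z
    using bound[of z] mult_left_mono[OF power_increasing[OF \<open>n \<le> 2\<close>] \<open>C \<ge> 0\<close>, of "1 + norm z"]
    by simp
  define K where "K = (lam / (2 * pi)) powr (real CARD('d) / 2)"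
  have dens: "gauss_dens lam z = K * exp (- (lam / 2) * (norm z)\<^sup>2)" for z :: "real^'d"
    unfolding gauss_dens_def K_def by simp
  have "integrable lborel (\<lambda>z. gauss_dens lam z *\<^sub>R f z)"
  proof (rule Bochner_Integration.integrable_bound)
    show "integrable lborel (\<lambda>z::real^'d. K * C * ((1 + norm z)\<^sup>2 * exp (- (lam / 2) * (norm z)\<^sup>2)))"
      using lam by (intro integrable_mult_right integrable_quadratic_exp_neg_norm_sq) simp
    have "norm (gauss_dens lam z *\<^sub>R f z) = gauss_dens lam z * norm (f z)" for z
      by (simp add: gauss_dens_nonneg)
    also have "\<dots> z \<le> gauss_dens lam z * (C * (1 + norm z)\<^sup>2)" for z
      by (intro mult_left_mono quadratic gauss_dens_nonneg)
    also have "\<dots> z = K * C * ((1 + norm z)\<^sup>2 * exp (- (lam / 2) * (norm z)\<^sup>2))" for z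
      by (simp add: dens)
    finally have "norm (gauss_dens lam z *\<^sub>R f z) \<le> K * C * ((1 + norm z)\<^sup>2 * exp (- (lam / 2) * (norm z)\<^sup>2))" for z .
    then show "AE z in lborel. norm (gauss_dens lam z *\<^sub>R f z)
        \<le> norm (K * C * ((1 + norm z)\<^sup>2 * exp (- (lam / 2) * (norm z)\<^sup>2)))"
      by (intro AE_I2) (metis abs_ge_self order_trans real_norm_def)
  qed measurable
  then show ?thesis
    unfolding gauss_meas_def by (subst integrable_density) (auto simp: gauss_dens_nonneg)
qed

lemma integral_gauss_meas:
  fixes f :: "real^'d \<Rightarrow> real"
  assumes "f \<in> borel_measurable borel"
  shows "(\<integral>z. f z \<partial>gauss_meas lam) = (\<integral>z. gauss_dens lam z * f z \<partial>lborel)"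
  unfolding gauss_meas_def using assms by (subst integral_density) (auto simp: gauss_dens_nonneg)

lemma integrable_gauss_meas_iff:
  fixes f :: "real^'d \<Rightarrow> real"
  assumes "f \<in> borel_measurable borel"
  shows "integrable (gauss_meas lam) f \<longleftrightarrow> integrable lborel (\<lambda>z. gauss_dens lam z * f z)"
  unfolding gauss_meas_def using assms by (subst integrable_density) (auto simp: gauss_dens_nonneg)

lemma integral_gauss_meas_translate:
  fixes f :: "real^'d \<Rightarrow> real"
  assumes [measurable]: "f \<in> borel_measurable borel"
  shows "(\<integral>z. f (z + v) \<partial>gauss_meas lam) = (\<integral>w. gauss_dens lam (w - v) * f w \<partial>lborel)"
proof -
  have "(\<integral>w. gauss_dens lam (w - v) * f w \<partial>lborel)
      = (\<integral>w. gauss_dens lam (w - v) * f w \<partial>distr lborel borel ((+) v))"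
    by (simp add: lborel_distr_plus)
  also have "\<dots> = (\<integral>z. gauss_dens lam z * f (z + v) \<partial>lborel)"
    by (subst integral_distr) (auto simp: add.commute)
  also have "\<dots> = (\<integral>z. f (z + v) \<partial>gauss_meas lam)"
    by (rule integral_gauss_meas[symmetric]) measurable
  finally show ?thesis ..
qed

section \<open>Differentiation under the integral sign\<close>

lemma DERIV_along_line:
  fixes f :: "'a::real_vector \<Rightarrow> real"
  assumes "\<And>y. ((\<lambda>s. f (y + s *\<^sub>R v)) has_real_derivative f' y) (at 0)"
  shows "((\<lambda>s. f (x + s *\<^sub>R v)) has_real_derivative f' (x + t *\<^sub>R v)) (at t)"
proof -
  have "((\<lambda>s. f (x + (s + t) *\<^sub>R v)) has_real_derivative f' (x + t *\<^sub>R v)) (at 0)"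
    using assms[of "x + t *\<^sub>R v"] by (simp add: scaleR_add_left algebra_simps)
  then show ?thesis using DERIV_shift[of "\<lambda>s. f (x + s *\<^sub>R v)" _ 0 t] by simp
qed

lemma abs_diff_le_of_DERIV_bound:
  fixes f f' :: "real \<Rightarrow> real"
  assumes "\<And>s. \<bar>s\<bar> \<le> 1 \<Longrightarrow> (f has_real_derivative f' s) (at s)"
    and "\<And>s. \<bar>s\<bar> \<le> 1 \<Longrightarrow> \<bar>f' s\<bar> \<le> B" and "\<bar>t\<bar> \<le> 1"
  shows "\<bar>f t - f 0\<bar> \<le> B * \<bar>t\<bar>"
proof -
  have "norm (f t - f 0) \<le> B * norm (t - 0)"
  proof (rule field_differentiable_bound[where S="{-1..1}" and f=f and f'=f'])
    show "(f has_field_derivative f' s) (at s within {-1..1})" if "s \<in> {-1..1}" for s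
      using assms(1)[of s] that by (auto intro: has_field_derivative_at_within)
    show "norm (f' s) \<le> B" if "s \<in> {-1..1}" for s
      using assms(2)[of s] that by auto
  qed (use assms(3) in \<open>simp_all add: abs_le_iff\<close>)
  then show ?thesis by simp
qed

lemma DERIV_integral_dominated:
  fixes f f' :: "real \<Rightarrow> 'a \<Rightarrow> real"
  assumes deriv: "\<And>t z. \<bar>t\<bar> \<le> 1 \<Longrightarrow> ((\<lambda>s. f s z) has_real_derivative f' t z) (at t)"
    and [measurable]: "\<And>t. f t \<in> borel_measurable M" "f' 0 \<in> borel_measurable M"
    and integrable_0: "integrable M (f 0)" and "integrable M G"
    and bound: "\<And>t z. \<bar>t\<bar> \<le> 1 \<Longrightarrow> \<bar>f' t z\<bar> \<le> G z"
  shows "((\<lambda>t. \<integral>z. f t z \<partial>M) has_real_derivative (\<integral>z. f' 0 z \<partial>M)) (at 0)"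
proof -
  have mvt: "\<bar>f t z - f 0 z\<bar> \<le> G z * \<bar>t\<bar>" if "\<bar>t\<bar> \<le> 1" for t z
    using deriv bound that by (rule abs_diff_le_of_DERIV_bound)
  have integrable_t: "integrable M (f t)" if "\<bar>t\<bar> \<le> 1" for t
  proof -
    have "integrable M (\<lambda>z. f t z - f 0 z)"
    proof (rule Bochner_Integration.integrable_bound)
      show "integrable M (\<lambda>z. G z * \<bar>t\<bar>)" using \<open>integrable M G\<close> by simp
      show "AE z in M. norm (f t z - f 0 z) \<le> norm (G z * \<bar>t\<bar>)"
        using mvt[OF that] by (intro AE_I2) (auto intro: order_trans[OF _ abs_ge_self])
    qed measurable
    from Bochner_Integration.integrable_add[OF this integrable_0] show ?thesis by simp
  qed
  let ?F = "\<lambda>t. \<integral>z. f t z \<partial>M"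
  show ?thesis
    unfolding has_field_derivative_iff tendsto_at_iff_sequentially comp_def
  proof (intro allI impI)
    fix X :: "nat \<Rightarrow> real" assume X0: "\<forall>n. X n \<in> UNIV - {0}" and X: "X \<longlonglongrightarrow> 0"
    then obtain N where N: "\<And>n. N \<le> n \<Longrightarrow> \<bar>X n\<bar> \<le> 1"
      unfolding LIMSEQ_def dist_real_def by (metis diff_zero less_imp_le zero_less_one)
    let ?Y = "\<lambda>n. X (n + N)"
    have "(\<lambda>n. \<integral>z. (f (?Y n) z - f 0 z) / ?Y n \<partial>M) \<longlonglongrightarrow> (\<integral>z. f' 0 z \<partial>M)"
    proof (rule integral_dominated_convergence[where w=G])
      have "?Y \<longlonglongrightarrow> 0" "\<forall>n. ?Y n \<in> UNIV - {0}"
        using X X0 by (simp_all add: LIMSEQ_ignore_initial_segment)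
      moreover have "((\<lambda>s. (f s z - f 0 z) / (s - 0)) \<longlongrightarrow> f' 0 z) (at 0)" for z
        using deriv[of 0 z] by (simp add: has_field_derivative_iff)
      ultimately show "AE z in M. (\<lambda>n. (f (?Y n) z - f 0 z) / ?Y n) \<longlonglongrightarrow> f' 0 z"
        unfolding tendsto_at_iff_sequentially comp_def by (intro AE_I2) force
      show "AE z in M. norm ((f (?Y n) z - f 0 z) / ?Y n) \<le> G z" for n
        using mvt[OF N[of "n + N"]] X0 by (intro AE_I2) (simp add: abs_divide divide_le_eq)
    qed (use \<open>integrable M G\<close> in simp_all)
    then have "(\<lambda>n. (?F (?Y n) - ?F 0) / (?Y n - 0)) \<longlonglongrightarrow> (\<integral>z. f' 0 z \<partial>M)"
      using integrable_t[OF N] integrable_0 by simp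
    then show "(\<lambda>n. (?F (X n) - ?F 0) / (X n - 0)) \<longlonglongrightarrow> (\<integral>z. f' 0 z \<partial>M)"
      by (rule LIMSEQ_offset)
  qed
qed

section \<open>Gaussian integration by parts\<close>

lemma DERIV_gauss_dens_translate:
  "((\<lambda>s. gauss_dens lam (w - s *\<^sub>R v)) has_real_derivative
      lam * ((w - t *\<^sub>R v) \<bullet> v) * gauss_dens lam (w - t *\<^sub>R v)) (at t)"
proof -
  have inner_eq: "(w - t *\<^sub>R v) \<bullet> v = w \<bullet> v - t * (norm v)\<^sup>2"
    by (simp add: inner_diff_left power2_norm_eq_inner)
  show ?thesis
    unfolding gauss_dens_def norm_diff_scaleR_sq inner_eq
    by (auto intro!: derivative_eq_intros simp: field_simps)
qed

lemma gauss_dens_diff_le: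
  fixes w u :: "real^'d"
  assumes "lam \<ge> 0"
  shows "gauss_dens lam (w - u)
      \<le> exp (lam * (norm u)\<^sup>2 / 2) * ((lam / (2 * pi)) powr (real CARD('d) / 2) * exp (- (lam / 4) * (norm w)\<^sup>2))"
proof -
  have "norm w \<le> norm (w - u) + norm u"
    using norm_triangle_ineq[of "w - u" u] by simp
  then have "(norm w)\<^sup>2 \<le> (norm (w - u) + norm u)\<^sup>2" by (simp add: power_mono)
  also have "\<dots> \<le> 2 * (norm (w - u))\<^sup>2 + 2 * (norm u)\<^sup>2"
    using sum_squares_ge_zero[of "norm (w - u) - norm u" 0] by (simp add: power2_eq_square algebra_simps)
  finally have "lam * (norm w)\<^sup>2 \<le> lam * (2 * (norm (w - u))\<^sup>2 + 2 * (norm u)\<^sup>2)"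
    using assms by (intro mult_left_mono)
  then have "exp (- lam * (norm (w - u))\<^sup>2 / 2) \<le> exp (lam * (norm u)\<^sup>2 / 2) * exp (- (lam / 4) * (norm w)\<^sup>2)"
    by (simp add: exp_add[symmetric] algebra_simps)
  then have "(lam / (2 * pi)) powr (real CARD('d) / 2) * exp (- lam * (norm (w - u))\<^sup>2 / 2)
      \<le> (lam / (2 * pi)) powr (real CARD('d) / 2) * (exp (lam * (norm u)\<^sup>2 / 2) * exp (- (lam / 4) * (norm w)\<^sup>2))"
    by (intro mult_left_mono) simp_all
  then show ?thesis by (simp add: gauss_dens_def mult_ac)
qed

lemma abs_deriv_gauss_dens_translate_le:
  fixes w v :: "real^'d"
  assumes lam: "lam > 0" and "\<bar>t\<bar> \<le> 1"
  shows "\<bar>lam * ((w - t *\<^sub>R v) \<bullet> v) * gauss_dens lam (w - t *\<^sub>R v)\<bar>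
      \<le> lam * norm v * (1 + norm v) * exp (lam * (norm v)\<^sup>2 / 2) * (lam / (2 * pi)) powr (real CARD('d) / 2)
         * ((1 + norm w) * exp (- (lam / 4) * (norm w)\<^sup>2))"
proof -
  have tv: "norm (t *\<^sub>R v) \<le> norm v"
    using mult_left_le_one_le[of "norm v" "\<bar>t\<bar>"] assms(2) by simp
  have "\<bar>(w - t *\<^sub>R v) \<bullet> v\<bar> \<le> (norm w + norm v) * norm v"
    using Cauchy_Schwarz_ineq2[of "w - t *\<^sub>R v" v] norm_triangle_ineq4[of w "t *\<^sub>R v"] tv
    by (meson add_left_mono mult_right_mono norm_ge_zero order_trans)
  also have "\<dots> \<le> norm v * (1 + norm v) * (1 + norm w)"
    by (simp add: algebra_simps mult_left_mono)
  finally have inner_le: "\<bar>(w - t *\<^sub>R v) \<bullet> v\<bar> \<le> norm v * (1 + norm v) * (1 + norm w)" .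
  have "exp (lam * (norm (t *\<^sub>R v))\<^sup>2 / 2) \<le> exp (lam * (norm v)\<^sup>2 / 2)"
    using tv lam by (simp add: power_mono)
  then have dens_le: "gauss_dens lam (w - t *\<^sub>R v)
      \<le> exp (lam * (norm v)\<^sup>2 / 2) * ((lam / (2 * pi)) powr (real CARD('d) / 2) * exp (- (lam / 4) * (norm w)\<^sup>2))"
    using gauss_dens_diff_le[of lam w "t *\<^sub>R v"] lam by (auto elim!: order_trans intro: mult_right_mono)
  have "\<bar>lam * ((w - t *\<^sub>R v) \<bullet> v) * gauss_dens lam (w - t *\<^sub>R v)\<bar>
      = lam * \<bar>(w - t *\<^sub>R v) \<bullet> v\<bar> * gauss_dens lam (w - t *\<^sub>R v)"
    using lam by (simp add: abs_mult gauss_dens_nonneg)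
  also have "\<dots> \<le> lam * (norm v * (1 + norm v) * (1 + norm w))
      * (exp (lam * (norm v)\<^sup>2 / 2) * ((lam / (2 * pi)) powr (real CARD('d) / 2) * exp (- (lam / 4) * (norm w)\<^sup>2)))"
    using lam inner_le dens_le by (intro mult_mono mult_nonneg_nonneg) (auto simp: gauss_dens_nonneg)
  finally show ?thesis by (simp add: algebra_simps)
qed

lemma DERIV_gauss_expectation_translate:
  fixes \<phi> \<phi>' :: "real^'d \<Rightarrow> real"
  assumes lam: "lam > 0"
    and deriv: "\<And>z. ((\<lambda>s. \<phi> (z + s *\<^sub>R v)) has_real_derivative \<phi>' z) (at 0)"
    and [measurable]: "\<phi> \<in> borel_measurable borel" "\<phi>' \<in> borel_measurable borel"
    and bound: "\<And>z. \<bar>\<phi> z\<bar> \<le> C * (1 + norm z)" "\<And>z. \<bar>\<phi>' z\<bar> \<le> C * (1 + norm z)"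
  shows "((\<lambda>s. \<integral>z. \<phi> (z + s *\<^sub>R v) \<partial>gauss_meas lam) has_real_derivative
      (\<integral>z. \<phi>' z \<partial>gauss_meas lam)) (at 0)"
proof -
  have "C \<ge> 0" using order_trans[OF abs_ge_zero bound(1)[of 0]] by simp
  have "((\<lambda>s. \<integral>z. \<phi> (z + s *\<^sub>R v) \<partial>gauss_meas lam) has_real_derivative
      (\<integral>z. \<phi>' (z + 0 *\<^sub>R v) \<partial>gauss_meas lam)) (at 0)"
  proof (rule DERIV_integral_dominated[where G="\<lambda>z. C * (1 + norm v) * (1 + norm z)"])
    show "((\<lambda>s. \<phi> (z + s *\<^sub>R v)) has_real_derivative \<phi>' (z + t *\<^sub>R v)) (at t)" for t z
      using deriv by (rule DERIV_along_line)
    show "integrable (gauss_meas lam) (\<lambda>z. \<phi> (z + 0 *\<^sub>R v))"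
      using bound(1) by (intro integrable_gauss_meas[OF lam, where n=1 and C=C]) auto
    show "integrable (gauss_meas lam) (\<lambda>z. C * (1 + norm v) * (1 + norm z))"
      using \<open>C \<ge> 0\<close> by (intro integrable_gauss_meas[OF lam, where n=1 and C="C * (1 + norm v)"]) auto
    show "\<bar>\<phi>' (z + t *\<^sub>R v)\<bar> \<le> C * (1 + norm v) * (1 + norm z)" if "\<bar>t\<bar> \<le> 1" for t z
    proof -
      have "norm (z + t *\<^sub>R v) \<le> norm z + norm v"
        using norm_triangle_ineq[of z "t *\<^sub>R v"] mult_left_le_one_le[of "norm v" "\<bar>t\<bar>"] that by simp
      moreover have "(1 + norm v) * (1 + norm z) = 1 + norm v + norm z + norm v * norm z"
        by (simp add: algebra_simps)
      moreover have "0 \<le> norm v * norm z" by simp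
      ultimately have "1 + norm (z + t *\<^sub>R v) \<le> (1 + norm v) * (1 + norm z)"
        by linarith
      then show ?thesis
        using order_trans[OF bound(2) mult_left_mono[OF _ \<open>C \<ge> 0\<close>]] by (simp add: mult.assoc)
    qed
  qed measurable
  then show ?thesis by simp
qed

lemma DERIV_gauss_density_translate:
  fixes \<phi> :: "real^'d \<Rightarrow> real"
  assumes lam: "lam > 0" and meas[measurable]: "\<phi> \<in> borel_measurable borel"
    and bound: "\<And>z. \<bar>\<phi> z\<bar> \<le> C * (1 + norm z)"
  shows "((\<lambda>s. \<integral>w. gauss_dens lam (w - s *\<^sub>R v) * \<phi> w \<partial>lborel) has_real_derivative
      lam * (\<integral>z. \<phi> z * (z \<bullet> v) \<partial>gauss_meas lam)) (at 0)"
proof -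
  have "C \<ge> 0" using order_trans[OF abs_ge_zero bound[of 0]] by simp
  define B where "B = lam * norm v * (1 + norm v) * exp (lam * (norm v)\<^sup>2 / 2)
    * (lam / (2 * pi)) powr (real CARD('d) / 2) * C"
  have "((\<lambda>s. \<integral>w. gauss_dens lam (w - s *\<^sub>R v) * \<phi> w \<partial>lborel) has_real_derivative
      (\<integral>w. lam * ((w - 0 *\<^sub>R v) \<bullet> v) * gauss_dens lam (w - 0 *\<^sub>R v) * \<phi> w \<partial>lborel)) (at 0)"
  proof (rule DERIV_integral_dominated[where
        G="\<lambda>w. B * ((1 + norm w)\<^sup>2 * exp (- (lam / 4) * (norm w)\<^sup>2))"])
    show "((\<lambda>s. gauss_dens lam (w - s *\<^sub>R v) * \<phi> w) has_real_derivative
        lam * ((w - t *\<^sub>R v) \<bullet> v) * gauss_dens lam (w - t *\<^sub>R v) * \<phi> w) (at t)" for t w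
      by (intro DERIV_cmult_right DERIV_gauss_dens_translate)
    show "integrable lborel (\<lambda>w. gauss_dens lam (w - 0 *\<^sub>R v) * \<phi> w)"
    proof -
      have "integrable (gauss_meas lam) \<phi>"
        using bound by (intro integrable_gauss_meas[OF lam, where n=1 and C=C]) auto
      then show ?thesis using integrable_gauss_meas_iff[OF meas] by simp
    qed
    show "integrable lborel (\<lambda>w::real^'d. B * ((1 + norm w)\<^sup>2 * exp (- (lam / 4) * (norm w)\<^sup>2)))"
      using lam by (intro integrable_mult_right integrable_quadratic_exp_neg_norm_sq) simp
    show "\<bar>lam * ((w - t *\<^sub>R v) \<bullet> v) * gauss_dens lam (w - t *\<^sub>R v) * \<phi> w\<bar>
        \<le> B * ((1 + norm w)\<^sup>2 * exp (- (lam / 4) * (norm w)\<^sup>2))" if "\<bar>t\<bar> \<le> 1" for t w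
    proof -
      have "\<bar>lam * ((w - t *\<^sub>R v) \<bullet> v) * gauss_dens lam (w - t *\<^sub>R v) * \<phi> w\<bar>
          \<le> (lam * norm v * (1 + norm v) * exp (lam * (norm v)\<^sup>2 / 2) * (lam / (2 * pi)) powr (real CARD('d) / 2)
              * ((1 + norm w) * exp (- (lam / 4) * (norm w)\<^sup>2))) * (C * (1 + norm w))"
        unfolding abs_mult[of _ "\<phi> w"]
        using lam \<open>C \<ge> 0\<close>
        by (intro mult_mono abs_deriv_gauss_dens_translate_le[OF lam that] bound)
          (auto intro!: mult_nonneg_nonneg)
      also have "\<dots> = B * ((1 + norm w)\<^sup>2 * exp (- (lam / 4) * (norm w)\<^sup>2))"
        by (simp add: B_def power2_eq_square mult_ac)
      finally show ?thesis .
    qed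
  qed measurable
  moreover have "(\<integral>w. lam * ((w - 0 *\<^sub>R v) \<bullet> v) * gauss_dens lam (w - 0 *\<^sub>R v) * \<phi> w \<partial>lborel)
      = lam * (\<integral>z. \<phi> z * (z \<bullet> v) \<partial>gauss_meas lam)"
    by (subst integral_gauss_meas) (simp_all add: algebra_simps)
  ultimately show ?thesis by simp
qed

lemma gauss_integration_by_parts:
  fixes \<phi> \<phi>' :: "real^'d \<Rightarrow> real"
  assumes lam: "lam > 0"
    and deriv: "\<And>z. ((\<lambda>s. \<phi> (z + s *\<^sub>R v)) has_real_derivative \<phi>' z) (at 0)"
    and meas[measurable]: "\<phi> \<in> borel_measurable borel" "\<phi>' \<in> borel_measurable borel"
    and bound: "\<And>z. \<bar>\<phi> z\<bar> \<le> C * (1 + norm z)" "\<And>z. \<bar>\<phi>' z\<bar> \<le> C * (1 + norm z)"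
  shows "(\<integral>z. \<phi> z * (z \<bullet> v) \<partial>gauss_meas lam) = (\<integral>z. \<phi>' z \<partial>gauss_meas lam) / lam"
proof -
  \<comment> \<open>Differentiate \<open>s \<mapsto> E \<phi>(Z + s v)\<close> at 0 twice: under the integral sign, and after
    moving the shift onto the Gaussian density.\<close>
  have translate: "(\<lambda>s. \<integral>z. \<phi> (z + s *\<^sub>R v) \<partial>gauss_meas lam)
      = (\<lambda>s. \<integral>w. gauss_dens lam (w - s *\<^sub>R v) * \<phi> w \<partial>lborel)"
    by (intro ext integral_gauss_meas_translate) measurable
  have "(\<integral>z. \<phi>' z \<partial>gauss_meas lam) = lam * (\<integral>z. \<phi> z * (z \<bullet> v) \<partial>gauss_meas lam)"
    using DERIV_unique[OF DERIV_gauss_expectation_translate[OF assms, unfolded translate]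
        DERIV_gauss_density_translate[OF lam meas(1) bound(1)]] .
  then show ?thesis using lam by (simp add: field_simps)
qed

lemma gauss_integration_by_parts_affine:
  fixes \<phi> \<phi>' :: "real^'d \<Rightarrow> real"
  assumes lam: "lam > 0"
    and deriv: "\<And>z. ((\<lambda>s. \<phi> (z + s *\<^sub>R v)) has_real_derivative \<phi>' z) (at 0)"
    and [measurable]: "\<phi> \<in> borel_measurable borel" "\<phi>' \<in> borel_measurable borel"
    and bound: "\<And>z. \<bar>\<phi> z\<bar> \<le> C * (1 + norm z)" "\<And>z. \<bar>\<phi>' z\<bar> \<le> C * (1 + norm z)"
  shows "(\<integral>z. \<phi> z * (a + z \<bullet> v) \<partial>gauss_meas lam) = (\<integral>z. a * \<phi> z + \<phi>' z / lam \<partial>gauss_meas lam)"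
proof -
  have "C \<ge> 0" using order_trans[OF abs_ge_zero bound(1)[of 0]] by simp
  have int: "integrable (gauss_meas lam) \<phi>" "integrable (gauss_meas lam) \<phi>'"
    using bound by (auto intro!: integrable_gauss_meas[OF lam, where n=1 and C=C])
  have "\<bar>\<phi> z * (z \<bullet> v)\<bar> \<le> (C * norm v) * (1 + norm z)\<^sup>2" for z
  proof -
    have "\<bar>\<phi> z * (z \<bullet> v)\<bar> \<le> (C * (1 + norm z)) * (norm v * (1 + norm z))"
      unfolding abs_mult using bound(1)[of z] Cauchy_Schwarz_ineq2[of z v] \<open>C \<ge> 0\<close>
      by (intro mult_mono) (auto simp: algebra_simps mult_left_mono intro: order_trans)
    then show ?thesis by (simp add: power2_eq_square algebra_simps)
  qed
  then have "integrable (gauss_meas lam) (\<lambda>z. \<phi> z * (z \<bullet> v))"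
    by (intro integrable_gauss_meas[OF lam, where n=2 and C="C * norm v"]) auto
  with int show ?thesis
    using gauss_integration_by_parts[OF assms] by (simp add: distrib_left)
qed

section \<open>Softmax calculus\<close>

lemma sum_exp_pos: "(\<Sum>a\<in>(UNIV::'k::finite set). exp (f a :: real)) > 0"
  by (intro sum_pos) auto

lemma DERIV_log_sum_exp_linear:
  fixes u w :: "'k::finite \<Rightarrow> real"
  shows "((\<lambda>t. ln (\<Sum>a\<in>UNIV. exp (u a + t * w a))) has_real_derivative
           (\<Sum>a\<in>UNIV. exp (u a) * w a) / (\<Sum>a\<in>UNIV. exp (u a))) (at 0)"
proof -
  have "((\<lambda>t. \<Sum>a\<in>UNIV. exp (u a + t * w a)) has_real_derivative (\<Sum>a\<in>UNIV. exp (u a) * w a)) (at 0)"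
    by (auto intro!: derivative_eq_intros)
  then show ?thesis using sum_exp_pos[of u] by (auto intro!: derivative_eq_intros)
qed

lemma DERIV_softmax_linear:
  fixes u w :: "'k::finite \<Rightarrow> real"
  defines "S \<equiv> \<Sum>a\<in>UNIV. exp (u a)"
  shows "((\<lambda>t. exp (u c + t * w c) / (\<Sum>a\<in>UNIV. exp (u a + t * w a))) has_real_derivative
     exp (u c) / S * (w c - (\<Sum>a\<in>UNIV. exp (u a) / S * w a))) (at 0)"
proof -
  have "S > 0" unfolding S_def by (rule sum_exp_pos)
  have "((\<lambda>t. exp (u c + t * w c) / (\<Sum>a\<in>UNIV. exp (u a + t * w a))) has_real_derivative
     (exp (u c) * w c * S - exp (u c) * (\<Sum>a\<in>UNIV. exp (u a) * w a)) / (S * S)) (at 0)"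
    using \<open>S > 0\<close> unfolding S_def by (auto intro!: derivative_eq_intros)
  moreover have "(exp (u c) * w c * S - exp (u c) * (\<Sum>a\<in>UNIV. exp (u a) * w a)) / (S * S)
     = exp (u c) / S * (w c - (\<Sum>a\<in>UNIV. exp (u a) / S * w a))"
    using \<open>S > 0\<close> by (simp add: field_simps sum_divide_distrib[symmetric])
  ultimately show ?thesis by simp
qed

lemma softmax_nonneg: "softmax x Y a \<ge> 0"
  unfolding softmax_def by (simp add: sum_nonneg)

lemma sum_softmax: "(\<Sum>a\<in>UNIV. softmax x Y a) = 1"
  unfolding softmax_def using sum_exp_pos[of "\<lambda>a. x $ a \<bullet> Y"]
  by (simp add: sum_divide_distrib[symmetric])

lemma softmax_le_1: "softmax x Y a \<le> 1"
proof -
  have "softmax x Y a \<le> (\<Sum>a\<in>UNIV. softmax x Y a)"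
    by (rule member_le_sum) (simp_all add: softmax_nonneg)
  then show ?thesis by (simp add: sum_softmax)
qed

lemma DERIV_softmax_param:
  "((\<lambda>t. softmax (x + t *\<^sub>R v) Y c) has_real_derivative
     softmax x Y c * (v $ c \<bullet> Y - (\<Sum>a\<in>UNIV. softmax x Y a * (v $ a \<bullet> Y)))) (at 0)"
  using DERIV_softmax_linear[where u="\<lambda>a. x $ a \<bullet> Y" and w="\<lambda>a. v $ a \<bullet> Y" and c=c]
  by (simp add: softmax_def inner_add_left)

lemma gibbs_mean_nth: "gibbs_mean x Y $ i = (\<Sum>a\<in>UNIV. softmax x Y a * x $ a $ i)"
  by (simp add: gibbs_mean_def)

lemma gibbs_mean_inner: "gibbs_mean x Y \<bullet> e = (\<Sum>a\<in>UNIV. softmax x Y a * (x $ a \<bullet> e))"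
  by (simp add: gibbs_mean_def inner_sum_left)

lemma DERIV_softmax_data:
  "((\<lambda>s. softmax x (Y + s *\<^sub>R e) c) has_real_derivative
     softmax x Y c * ((x $ c - gibbs_mean x Y) \<bullet> e)) (at 0)"
  using DERIV_softmax_linear[where u="\<lambda>a. x $ a \<bullet> Y" and w="\<lambda>a. x $ a \<bullet> e" and c=c]
  by (simp add: softmax_def inner_add_right inner_diff_left gibbs_mean_inner mult.commute)

lemma coord_nth_inner: "coord b i $ a \<bullet> Y = (if a = b then Y $ i else 0)"
proof -
  have "coord b i $ a = (if a = b then axis i 1 else 0)"
    unfolding coord_def axis_def[of b] by simp
  then show ?thesis by (simp add: inner_axis')
qed

lemma DERIV_softmax_coord:
  assumes "b \<noteq> c"
  shows "((\<lambda>t. softmax (x + t *\<^sub>R coord b i) Y c) has_real_derivative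
           - (softmax x Y b * softmax x Y c * Y $ i)) (at 0)"
  using DERIV_softmax_param[of x "coord b i" Y c] assms
  by (simp add: coord_nth_inner if_distrib[of "\<lambda>r. _ * r"] mult_ac cong: if_cong)

lemma loss_axis: "loss x (axis l 1) Y = ln (\<Sum>a\<in>UNIV. exp (x $ a \<bullet> Y)) - x $ l \<bullet> Y"
  by (simp add: loss_def axis_def if_distrib[of "\<lambda>r. r * _"] cong: if_cong)

lemma DERIV_loss_coord:
  "((\<lambda>t. loss (x + t *\<^sub>R coord c j) (axis l 1) Y) has_real_derivative
      (softmax x Y c - (if l = c then 1 else 0)) * Y $ j) (at 0)"
proof -
  let ?u = "\<lambda>a. x $ a \<bullet> Y" and ?w = "\<lambda>a. coord c j $ a \<bullet> Y"
  have loss_line: "loss (x + t *\<^sub>R coord c j) (axis l 1) Y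
      = ln (\<Sum>a\<in>UNIV. exp (?u a + t * ?w a)) - (?u l + t * ?w l)" for t
    by (simp add: loss_axis inner_add_left)
  have "((\<lambda>t. ln (\<Sum>a\<in>UNIV. exp (?u a + t * ?w a)) - (?u l + t * ?w l)) has_real_derivative
      (\<Sum>a\<in>UNIV. exp (?u a) * ?w a) / (\<Sum>a\<in>UNIV. exp (?u a)) - ?w l) (at 0)"
    by (intro DERIV_diff DERIV_log_sum_exp_linear) (auto intro!: derivative_eq_intros)
  moreover have "(\<Sum>a\<in>UNIV. exp (?u a) * ?w a) / (\<Sum>a\<in>UNIV. exp (?u a)) - ?w l
      = (softmax x Y c - (if l = c then 1 else 0)) * Y $ j"
    by (simp add: coord_nth_inner softmax_def if_distrib[of "\<lambda>r. _ * r"] algebra_simps cong: if_cong)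
  ultimately show ?thesis unfolding loss_line by simp
qed

lemma gibbs_cov_nth:
  "gibbs_cov x Y $ i = (\<Sum>a\<in>UNIV. (softmax x Y a * x $ a $ i) *\<^sub>R x $ a) - gibbs_mean x Y $ i *\<^sub>R gibbs_mean x Y"
  by (simp add: gibbs_cov_def outer_nth)

lemma gibbs_cov_mult_vec_nth:
  "(gibbs_cov x Y *v e) $ i
     = (\<Sum>a\<in>UNIV. softmax x Y a * x $ a $ i * (x $ a \<bullet> e)) - gibbs_mean x Y $ i * (gibbs_mean x Y \<bullet> e)"
  by (simp add: matrix_vector_mul_component gibbs_cov_nth inner_diff_left inner_sum_left)

lemma DERIV_gibbs_mean_data:
  "((\<lambda>s. gibbs_mean x (Y + s *\<^sub>R e) $ i) has_real_derivative (gibbs_cov x Y *v e) $ i) (at 0)"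
proof -
  have "((\<lambda>s. \<Sum>a\<in>UNIV. softmax x (Y + s *\<^sub>R e) a * x $ a $ i) has_real_derivative
      (\<Sum>a\<in>UNIV. softmax x Y a * ((x $ a - gibbs_mean x Y) \<bullet> e) * x $ a $ i)) (at 0)"
    by (intro DERIV_sum DERIV_cmult_right DERIV_softmax_data)
  moreover have "(\<Sum>a\<in>UNIV. softmax x Y a * ((x $ a - gibbs_mean x Y) \<bullet> e) * x $ a $ i)
      = (gibbs_cov x Y *v e) $ i"
    by (simp add: gibbs_cov_mult_vec_nth gibbs_mean_nth inner_diff_left algebra_simps
        sum_subtractf sum_distrib_left sum_distrib_right)
  ultimately show ?thesis by (simp add: gibbs_mean_nth)
qed

lemma abs_gibbs_mean_nth_le: "\<bar>gibbs_mean x Y $ i\<bar> \<le> norm x"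
proof -
  have "\<bar>gibbs_mean x Y $ i\<bar> \<le> (\<Sum>a\<in>UNIV. softmax x Y a * \<bar>x $ a $ i\<bar>)"
    unfolding gibbs_mean_nth using sum_abs by (simp add: abs_mult softmax_nonneg order_trans[OF sum_abs])
  also have "\<dots> \<le> (\<Sum>a\<in>UNIV. softmax x Y a * norm x)"
    by (intro sum_mono mult_left_mono abs_nth_nth_le_norm softmax_nonneg)
  finally show ?thesis by (simp add: sum_distrib_right[symmetric] sum_softmax)
qed

lemma abs_gibbs_cov_nth_le: "\<bar>gibbs_cov x Y $ i $ j\<bar> \<le> 2 * (norm x)\<^sup>2"
proof -
  have "\<bar>softmax x Y a * x $ a $ i * x $ a $ j\<bar> \<le> softmax x Y a * (norm x * norm x)" for a
    unfolding abs_mult mult.assoc abs_of_nonneg[OF softmax_nonneg]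
    by (intro mult_left_mono mult_mono abs_nth_nth_le_norm softmax_nonneg) auto
  then have "\<bar>\<Sum>a\<in>UNIV. softmax x Y a * x $ a $ i * x $ a $ j\<bar> \<le> (\<Sum>a\<in>UNIV. softmax x Y a * (norm x * norm x))"
    by (rule order_trans[OF sum_abs sum_mono])
  moreover have "\<bar>gibbs_mean x Y $ i * gibbs_mean x Y $ j\<bar> \<le> norm x * norm x"
    unfolding abs_mult by (intro mult_mono abs_gibbs_mean_nth_le) auto
  ultimately show ?thesis
    by (simp add: gibbs_cov_nth sum_distrib_right[symmetric] sum_softmax power2_eq_square mult.assoc)
qed

lemma abs_loss_axis_le:
  fixes x :: "real^'d^'k::finite"
  shows "\<bar>loss x (axis l 1) Y\<bar> \<le> ln CARD('k) + 2 * norm x * norm Y"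
proof -
  let ?S = "\<Sum>a\<in>UNIV. exp (x $ a \<bullet> Y)"
  have inner_le: "\<bar>x $ a \<bullet> Y\<bar> \<le> norm x * norm Y" for a
    using Cauchy_Schwarz_ineq2[of "x $ a" Y] Finite_Cartesian_Product.norm_nth_le[of x a]
    by (meson mult_right_mono norm_ge_zero order_trans)
  have "exp (x $ l \<bullet> Y) \<le> ?S" by (rule member_le_sum) auto
  then have lower: "x $ l \<bullet> Y \<le> ln ?S" by (simp add: ln_ge_iff[OF sum_exp_pos])
  have "?S \<le> CARD('k) * exp (norm x * norm Y)"
    using sum_mono[of UNIV "\<lambda>a. exp (x $ a \<bullet> Y)" "\<lambda>_. exp (norm x * norm Y)"] inner_le
    by (simp add: abs_le_iff)
  then have "ln ?S \<le> ln (CARD('k) * exp (norm x * norm Y))"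
    using sum_exp_pos by (subst ln_le_cancel_iff) auto
  also have "\<dots> = ln CARD('k) + norm x * norm Y" by (simp add: ln_mult)
  finally have "ln ?S \<le> ln CARD('k) + norm x * norm Y" .
  moreover have "0 \<le> ln CARD('k)" by simp
  moreover have "0 \<le> norm x * norm Y" by simp
  ultimately show ?thesis
    using lower inner_le[of l] unfolding loss_axis abs_le_iff by linarith
qed

lemma measurable_softmax[measurable (raw)]:
  assumes [measurable]: "g \<in> borel_measurable M"
  shows "(\<lambda>z. softmax x (g z) a) \<in> borel_measurable M"
  unfolding softmax_def by measurable

lemma measurable_gibbs_mean[measurable (raw)]:
  assumes [measurable]: "g \<in> borel_measurable M"
  shows "(\<lambda>z. gibbs_mean x (g z)) \<in> borel_measurable M"
  unfolding gibbs_mean_def by measurable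

lemma measurable_outer[measurable (raw)]:
  assumes [measurable]: "f \<in> borel_measurable M" "g \<in> borel_measurable M"
  shows "(\<lambda>z. outer (f z) (g z)) \<in> borel_measurable M"
  unfolding outer_def by measurable

lemma measurable_gibbs_cov[measurable (raw)]:
  assumes [measurable]: "g \<in> borel_measurable M"
  shows "(\<lambda>z. gibbs_cov x (g z)) \<in> borel_measurable M"
  unfolding gibbs_cov_def by measurable

lemma measurable_loss[measurable (raw)]:
  assumes [measurable]: "g \<in> borel_measurable M"
  shows "(\<lambda>z. loss x y (g z)) \<in> borel_measurable M"
  unfolding loss_def by measurable

definition pair_prob :: "real^'d^'k::finite \<Rightarrow> 'k \<Rightarrow> 'k \<Rightarrow> real^'d \<Rightarrow> real" where
  "pair_prob x b c Y = softmax x Y b * softmax x Y c"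

definition pair_log_grad :: "real^'d^'k::finite \<Rightarrow> 'k \<Rightarrow> 'k \<Rightarrow> real^'d \<Rightarrow> real^'d" where
  "pair_log_grad x b c Y = x $ b + x $ c - 2 *\<^sub>R gibbs_mean x Y"

definition pair_center :: "real \<Rightarrow> real^'d^'k::finite \<Rightarrow> real^'d \<Rightarrow> 'k \<Rightarrow> 'k \<Rightarrow> real^'d \<Rightarrow> real^'d" where
  "pair_center lam x m b c Y = m + (1 / lam) *\<^sub>R pair_log_grad x b c Y"

definition hessian_integrand ::
    "real \<Rightarrow> real^'d^'k::finite \<Rightarrow> real^'d \<Rightarrow> 'k \<Rightarrow> 'k \<Rightarrow> real^'d \<Rightarrow> real^'d^'d" where
  "hessian_integrand lam x m b c Y = pair_prob x b c Y *\<^sub>R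
     (outer (pair_center lam x m b c Y) (pair_center lam x m b c Y)
      + (1 / lam) *\<^sub>R mat 1 - (2 / lam\<^sup>2) *\<^sub>R gibbs_cov x Y)"

definition hessian_low_rank ::
    "real \<Rightarrow> real^'d^'k::finite \<Rightarrow> real^'d \<Rightarrow> 'k \<Rightarrow> 'k \<Rightarrow> real^'d \<Rightarrow> real^'d^'d" where
  "hessian_low_rank lam x m b c Y = pair_prob x b c Y *\<^sub>R
     (outer (pair_center lam x m b c Y) (pair_center lam x m b c Y) - (2 / lam\<^sup>2) *\<^sub>R gibbs_cov x Y)"

lemma measurable_pair_prob[measurable (raw)]:
  assumes [measurable]: "g \<in> borel_measurable M"
  shows "(\<lambda>z. pair_prob x b c (g z)) \<in> borel_measurable M"
  unfolding pair_prob_def by measurable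

lemma measurable_pair_log_grad[measurable (raw)]:
  assumes [measurable]: "g \<in> borel_measurable M"
  shows "(\<lambda>z. pair_log_grad x b c (g z)) \<in> borel_measurable M"
  unfolding pair_log_grad_def by measurable

lemma measurable_pair_center[measurable (raw)]:
  assumes [measurable]: "g \<in> borel_measurable M"
  shows "(\<lambda>z. pair_center lam x m b c (g z)) \<in> borel_measurable M"
  unfolding pair_center_def by measurable

lemma measurable_hessian_low_rank[measurable (raw)]:
  assumes [measurable]: "g \<in> borel_measurable M"
  shows "(\<lambda>z. hessian_low_rank lam x m b c (g z)) \<in> borel_measurable M"
  unfolding hessian_low_rank_def by measurable

lemma pair_prob_nonneg: "0 \<le> pair_prob x b c Y"
  by (simp add: pair_prob_def softmax_nonneg)

lemma pair_prob_le_1: "pair_prob x b c Y \<le> 1"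
  unfolding pair_prob_def by (intro mult_le_one softmax_le_1 softmax_nonneg)

lemma abs_pair_prob_le_1: "\<bar>pair_prob x b c Y\<bar> \<le> 1"
  by (simp add: abs_of_nonneg pair_prob_nonneg pair_prob_le_1)

lemma abs_pair_prob_mult_le: "\<bar>pair_prob x b c Y * r\<bar> \<le> \<bar>r\<bar>"
  unfolding abs_mult by (intro mult_left_le_one_le abs_ge_zero abs_ge_zero abs_pair_prob_le_1)

lemma abs_pair_log_grad_nth_le: "\<bar>pair_log_grad x b c Y $ k\<bar> \<le> 4 * norm x"
  using abs_nth_nth_le_norm[of x b k] abs_nth_nth_le_norm[of x c k] abs_gibbs_mean_nth_le[of x Y k]
  by (simp add: pair_log_grad_def)

lemma abs_pair_center_nth_le:
  assumes "lam > 0"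
  shows "\<bar>pair_center lam x m b c Y $ k\<bar> \<le> norm m + 4 * norm x / lam"
proof -
  have "\<bar>pair_log_grad x b c Y $ k / lam\<bar> \<le> 4 * norm x / lam"
    using divide_right_mono[OF abs_pair_log_grad_nth_le, of lam x b c Y k] assms by simp
  moreover have "pair_center lam x m b c Y $ k = m $ k + pair_log_grad x b c Y $ k / lam"
    by (simp add: pair_center_def)
  ultimately show ?thesis
    using component_le_norm_cart[of m k] abs_triangle_ineq[of "m $ k" "pair_log_grad x b c Y $ k / lam"]
    by linarith
qed

lemma hessian_integrand_eq_low_rank:
  "hessian_integrand lam x m b c Y = hessian_low_rank lam x m b c Y + (pair_prob x b c Y / lam) *\<^sub>R mat 1"
  by (simp add: hessian_integrand_def hessian_low_rank_def algebra_simps)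

lemma hessian_low_rank_nth:
  "hessian_low_rank lam x m b c Y $ i $ j = pair_prob x b c Y *
     (pair_center lam x m b c Y $ i * pair_center lam x m b c Y $ j - 2 / lam\<^sup>2 * gibbs_cov x Y $ i $ j)"
  by (simp add: hessian_low_rank_def outer_def)

lemma hessian_integrand_nth:
  "hessian_integrand lam x m b c Y $ i $ j
     = hessian_low_rank lam x m b c Y $ i $ j + (if i = j then 1 / lam else 0) * pair_prob x b c Y"
  by (simp add: hessian_integrand_eq_low_rank mat_def)

lemma abs_hessian_low_rank_nth_le:
  assumes "lam > 0"
  shows "\<bar>hessian_low_rank lam x m b c Y $ i $ j\<bar> \<le> (norm m + 4 * norm x / lam)\<^sup>2 + 4 * (norm x)\<^sup>2 / lam\<^sup>2"
proof -
  have "\<bar>pair_center lam x m b c Y $ i * pair_center lam x m b c Y $ j\<bar> \<le> (norm m + 4 * norm x / lam)\<^sup>2"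
    unfolding abs_mult power2_eq_square using assms
    by (intro mult_mono abs_pair_center_nth_le assms) auto
  moreover have "\<bar>2 / lam\<^sup>2 * gibbs_cov x Y $ i $ j\<bar> \<le> 4 * (norm x)\<^sup>2 / lam\<^sup>2"
    using abs_gibbs_cov_nth_le[of x Y i j] assms by (simp add: abs_mult field_simps)
  ultimately have bound: "\<bar>pair_center lam x m b c Y $ i * pair_center lam x m b c Y $ j - 2 / lam\<^sup>2 * gibbs_cov x Y $ i $ j\<bar>
      \<le> (norm m + 4 * norm x / lam)\<^sup>2 + 4 * (norm x)\<^sup>2 / lam\<^sup>2"
    by linarith
  with abs_pair_prob_mult_le show ?thesis
    unfolding hessian_low_rank_nth by (rule order_trans)
qed

lemma hessian_low_rank_mult_vec_eq_0:
  assumes "m \<bullet> w = 0" and "\<And>a. x $ a \<bullet> w = 0"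
  shows "hessian_low_rank lam x m b c Y *v w = 0"
proof -
  have mean: "gibbs_mean x Y \<bullet> w = 0" by (simp add: gibbs_mean_inner assms(2))
  then have "pair_center lam x m b c Y \<bullet> w = 0"
    by (simp add: pair_center_def pair_log_grad_def inner_add_left inner_diff_left assms)
  moreover have "gibbs_cov x Y *v w = 0"
    by (simp add: vec_eq_iff gibbs_cov_mult_vec_nth assms(2) mean)
  ultimately show ?thesis
    by (simp add: hessian_low_rank_def matrix_vector_mult_diff_rdistrib
        scaleR_matrix_vector_assoc[symmetric] outer_mult_vec)
qed

lemma DERIV_pair_prob:
  "((\<lambda>s. pair_prob x b c (Y + s *\<^sub>R e)) has_real_derivative
      pair_prob x b c Y * (pair_log_grad x b c Y \<bullet> e)) (at 0)"
  using DERIV_mult[OF DERIV_softmax_data[of x Y e b] DERIV_softmax_data[of x Y e c]]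
  by (simp add: pair_prob_def pair_log_grad_def inner_diff_left inner_add_left algebra_simps)

lemma DERIV_pair_log_grad_nth:
  "((\<lambda>s. pair_log_grad x b c (Y + s *\<^sub>R e) $ i) has_real_derivative
      - 2 * (gibbs_cov x Y *v e) $ i) (at 0)"
  unfolding pair_log_grad_def
  by (auto intro!: derivative_eq_intros DERIV_gibbs_mean_data)

lemma abs_pair_prob_mult_nth_nth_le:
  "\<bar>pair_prob x b c (m + z) * (m + z) $ i * (m + z) $ j\<bar> \<le> (1 + norm m)\<^sup>2 * (1 + norm z)\<^sup>2"
proof -
  have "\<bar>(m + z) $ i * (m + z) $ j\<bar> \<le> ((1 + norm m) * (1 + norm z)) * ((1 + norm m) * (1 + norm z))"
    unfolding abs_mult by (intro mult_mono abs_add_nth_le) auto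
  then show ?thesis
    using abs_pair_prob_mult_le[of x b c "m + z" "(m + z) $ i * (m + z) $ j"]
    by (simp add: power2_eq_square algebra_simps)
qed

lemma DERIV_pair_prob_mult_nth:
  "((\<lambda>s. pair_prob x b c (Y + s *\<^sub>R axis i 1) * (Y + s *\<^sub>R axis i 1) $ j) has_real_derivative
      pair_prob x b c Y * (pair_log_grad x b c Y $ i * Y $ j + (if i = j then 1 else 0))) (at 0)"
proof -
  have "((\<lambda>s. (Y + s *\<^sub>R axis i 1) $ j) has_real_derivative (if i = j then 1 else 0)) (at 0)"
    by (auto intro!: derivative_eq_intros simp: axis_def)
  from DERIV_mult[OF DERIV_pair_prob[of x b c Y "axis i 1"] this] show ?thesis
    by (simp add: inner_axis algebra_simps)
qed

lemma DERIV_pair_prob_mult_center_nth: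
  "((\<lambda>s. pair_prob x b c (Y + s *\<^sub>R axis j 1) * pair_center lam x m b c (Y + s *\<^sub>R axis j 1) $ i)
      has_real_derivative pair_prob x b c Y *
        (pair_log_grad x b c Y $ j * pair_center lam x m b c Y $ i - 2 / lam * gibbs_cov x Y $ i $ j)) (at 0)"
proof -
  have "((\<lambda>s. m $ i + pair_log_grad x b c (Y + s *\<^sub>R axis j 1) $ i / lam) has_real_derivative
      0 + - 2 * (gibbs_cov x Y *v axis j 1) $ i / lam) (at 0)"
    by (intro DERIV_add DERIV_const DERIV_cdivide DERIV_pair_log_grad_nth)
  then have "((\<lambda>s. pair_center lam x m b c (Y + s *\<^sub>R axis j 1) $ i) has_real_derivative
      - 2 / lam * gibbs_cov x Y $ i $ j) (at 0)"
    by (simp add: pair_center_def matrix_vector_mul_component inner_axis)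
  from DERIV_mult[OF DERIV_pair_prob[of x b c Y "axis j 1"] this] show ?thesis
    by (simp add: inner_axis algebra_simps)
qed

lemma abs_deriv_pair_prob_mult_nth_le:
  "\<bar>pair_prob x b c (m + z) * (pair_log_grad x b c (m + z) $ i * (m + z) $ j + (if i = j then 1 else 0))\<bar>
     \<le> (1 + 4 * norm x) * ((1 + norm m) * (1 + norm z))"
proof -
  have "\<bar>pair_log_grad x b c (m + z) $ i * (m + z) $ j\<bar> \<le> 4 * norm x * ((1 + norm m) * (1 + norm z))"
    unfolding abs_mult by (intro mult_mono abs_pair_log_grad_nth_le abs_add_nth_le) auto
  moreover have "1 \<le> (1 + norm m) * (1 + norm z)"
    using mult_mono[of 1 "1 + norm m" 1 "1 + norm z"] by simp
  moreover have "\<bar>if i = j then 1 else 0 :: real\<bar> \<le> 1" by simp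
  ultimately have "\<bar>pair_log_grad x b c (m + z) $ i * (m + z) $ j + (if i = j then 1 else 0)\<bar>
      \<le> (1 + 4 * norm x) * ((1 + norm m) * (1 + norm z))"
    using abs_triangle_ineq[of "pair_log_grad x b c (m + z) $ i * (m + z) $ j" "if i = j then 1 else 0"]
    by (simp only: distrib_right mult_1)
  then show ?thesis using abs_pair_prob_mult_le order_trans by blast
qed

lemma abs_deriv_pair_prob_mult_center_nth_le:
  assumes "lam > 0"
  shows "\<bar>pair_prob x b c Y *
      (pair_log_grad x b c Y $ j * pair_center lam x m b c Y $ i - 2 / lam * gibbs_cov x Y $ i $ j)\<bar>
    \<le> 4 * norm x * (norm m + 4 * norm x / lam) + 4 * (norm x)\<^sup>2 / lam"
proof -
  have "\<bar>pair_log_grad x b c Y $ j * pair_center lam x m b c Y $ i\<bar> \<le> 4 * norm x * (norm m + 4 * norm x / lam)"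
    unfolding abs_mult by (intro mult_mono abs_pair_log_grad_nth_le abs_pair_center_nth_le assms) auto
  moreover have "\<bar>2 / lam * gibbs_cov x Y $ i $ j\<bar> \<le> 4 * (norm x)\<^sup>2 / lam"
    using abs_gibbs_cov_nth_le[of x Y i j] assms by (simp add: abs_mult field_simps)
  ultimately have "\<bar>pair_log_grad x b c Y $ j * pair_center lam x m b c Y $ i - 2 / lam * gibbs_cov x Y $ i $ j\<bar>
      \<le> 4 * norm x * (norm m + 4 * norm x / lam) + 4 * (norm x)\<^sup>2 / lam"
    using abs_triangle_ineq4[of "pair_log_grad x b c Y $ j * pair_center lam x m b c Y $ i"
        "2 / lam * gibbs_cov x Y $ i $ j"] by linarith
  then show ?thesis using abs_pair_prob_mult_le order_trans by blast
qed

lemma integrable_pair_prob: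
  assumes "lam > 0"
  shows "integrable (gauss_meas lam) (\<lambda>z. pair_prob x b c (m + z))"
  using abs_pair_prob_le_1 by (intro integrable_gauss_meas[OF assms, where n=0 and C=1]) auto

lemma integrable_hessian_low_rank_nth:
  assumes "lam > 0"
  shows "integrable (gauss_meas lam) (\<lambda>z. hessian_low_rank lam x m b c (m + z) $ i $ j)"
  using abs_hessian_low_rank_nth_le[OF assms]
  by (intro integrable_gauss_meas[OF assms, where n=0 and C="(norm m + 4 * norm x / lam)\<^sup>2 + 4 * (norm x)\<^sup>2 / lam\<^sup>2"]) auto

lemma integrable_hessian_low_rank:
  fixes x :: "real^'d^'k::finite" and m :: "real^'d"
  assumes "lam > 0"
  shows "integrable (gauss_meas lam) (\<lambda>z. hessian_low_rank lam x m b c (m + z))"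
proof (rule integrable_gauss_meas[OF assms, where n=0])
  let ?E = "(norm m + 4 * norm x / lam)\<^sup>2 + 4 * (norm x)\<^sup>2 / lam\<^sup>2"
  show "norm (hessian_low_rank lam x m b c (m + z)) \<le> (CARD('d) * CARD('d) * ?E) * (1 + norm z) ^ 0" for z
  proof -
    have "norm (hessian_low_rank lam x m b c (m + z))
        \<le> (\<Sum>i\<in>UNIV. \<Sum>j\<in>UNIV. \<bar>hessian_low_rank lam x m b c (m + z) $ i $ j\<bar>)"
      by (rule norm_le_sum_abs_nth_nth)
    also have "\<dots> \<le> (\<Sum>i\<in>(UNIV::'d set). \<Sum>j\<in>(UNIV::'d set). ?E)"
      by (intro sum_mono) (rule abs_hessian_low_rank_nth_le[OF assms])
    finally show ?thesis by simp
  qed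
qed measurable

lemma integrable_hessian_integrand:
  assumes "lam > 0"
  shows "integrable (gauss_meas lam) (\<lambda>z. hessian_integrand lam x m b c (m + z))"
  unfolding hessian_integrand_eq_low_rank
  using integrable_hessian_low_rank[OF assms] integrable_pair_prob[OF assms]
  by (intro Bochner_Integration.integrable_add integrable_scaleR_left integrable_divide_zero)

lemma integral_pair_prob_nth_nth:
  fixes x :: "real^'d^'k::finite" and m :: "real^'d"
  assumes lam: "lam > 0"
  shows "(\<integral>z. pair_prob x b c (m + z) * (m + z) $ i * (m + z) $ j \<partial>gauss_meas lam)
       = (\<integral>z. pair_prob x b c (m + z) * pair_center lam x m b c (m + z) $ i * (m + z) $ j
              + (if i = j then 1 / lam else 0) * pair_prob x b c (m + z) \<partial>gauss_meas lam)"
proof -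
  let ?h = "\<lambda>z. pair_prob x b c (m + z)" and ?g = "\<lambda>z. pair_log_grad x b c (m + z)"
  let ?\<delta> = "if i = j then 1 else 0 :: real"
  define C where "C = (1 + 4 * norm x) * (1 + norm m)"
  have "(\<integral>z. ?h z * (m + z) $ j * (m $ i + z \<bullet> axis i 1) \<partial>gauss_meas lam)
      = (\<integral>z. m $ i * (?h z * (m + z) $ j) + ?h z * (?g z $ i * (m + z) $ j + ?\<delta>) / lam \<partial>gauss_meas lam)"
  proof (rule gauss_integration_by_parts_affine[OF lam, where C=C])
    show "((\<lambda>s. ?h (z + s *\<^sub>R axis i 1) * (m + (z + s *\<^sub>R axis i 1)) $ j) has_real_derivative
        ?h z * (?g z $ i * (m + z) $ j + ?\<delta>)) (at 0)" for z
      using DERIV_pair_prob_mult_nth[of x b c "m + z" i j] by (simp add: add.assoc)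
    have C_eq: "C * (1 + norm z) = (1 + 4 * norm x) * ((1 + norm m) * (1 + norm z))" for z
      by (simp add: C_def)
    show "\<bar>?h z * (?g z $ i * (m + z) $ j + ?\<delta>)\<bar> \<le> C * (1 + norm z)" for z
      unfolding C_eq by (rule abs_deriv_pair_prob_mult_nth_le)
    show "\<bar>?h z * (m + z) $ j\<bar> \<le> C * (1 + norm z)" for z
      using abs_pair_prob_mult_le[of x b c "m + z" "(m + z) $ j"] abs_add_nth_le[of m z j]
        mult_right_mono[of 1 "1 + 4 * norm x" "(1 + norm m) * (1 + norm z)"] unfolding C_eq by simp
  qed measurable
  moreover have "(\<integral>z. ?h z * (m + z) $ j * (m $ i + z \<bullet> axis i 1) \<partial>gauss_meas lam)
      = (\<integral>z. ?h z * (m + z) $ i * (m + z) $ j \<partial>gauss_meas lam)"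
    by (intro Bochner_Integration.integral_cong) (simp_all add: inner_axis)
  moreover have "(\<integral>z. m $ i * (?h z * (m + z) $ j) + ?h z * (?g z $ i * (m + z) $ j + ?\<delta>) / lam \<partial>gauss_meas lam)
      = (\<integral>z. ?h z * pair_center lam x m b c (m + z) $ i * (m + z) $ j
              + (if i = j then 1 / lam else 0) * ?h z \<partial>gauss_meas lam)"
    using lam by (intro Bochner_Integration.integral_cong) (auto simp: pair_center_def field_simps)
  ultimately show ?thesis by simp
qed

lemma integral_pair_prob_center_nth:
  fixes x :: "real^'d^'k::finite" and m :: "real^'d"
  assumes lam: "lam > 0"
  shows "(\<integral>z. pair_prob x b c (m + z) * pair_center lam x m b c (m + z) $ i * (m + z) $ j \<partial>gauss_meas lam)
       = (\<integral>z. hessian_low_rank lam x m b c (m + z) $ i $ j \<partial>gauss_meas lam)"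
proof -
  let ?h = "\<lambda>z. pair_prob x b c (m + z)" and ?g = "\<lambda>z. pair_log_grad x b c (m + z)"
    and ?u = "\<lambda>z. pair_center lam x m b c (m + z)" and ?cov = "\<lambda>z. gibbs_cov x (m + z) $ i $ j"
  define B where "B = norm m + 4 * norm x / lam"
  define C where "C = (1 + 4 * norm x) * B + 4 * (norm x)\<^sup>2 / lam"
  have "(\<integral>z. ?h z * ?u z $ i * (m $ j + z \<bullet> axis j 1) \<partial>gauss_meas lam)
      = (\<integral>z. m $ j * (?h z * ?u z $ i) + ?h z * (?g z $ j * ?u z $ i - 2 / lam * ?cov z) / lam \<partial>gauss_meas lam)"
  proof (rule gauss_integration_by_parts_affine[OF lam, where C=C])
    show "((\<lambda>s. ?h (z + s *\<^sub>R axis j 1) * ?u (z + s *\<^sub>R axis j 1) $ i) has_real_derivative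
        ?h z * (?g z $ j * ?u z $ i - 2 / lam * ?cov z)) (at 0)" for z
      using DERIV_pair_prob_mult_center_nth[of x b c "m + z" j lam m i] by (simp add: add.assoc)
    have "0 \<le> B" "0 \<le> C" "0 \<le> 4 * (norm x)\<^sup>2 / lam" using lam by (simp_all add: B_def C_def)
    have C_le: "B \<le> C" "C \<le> C * (1 + norm z)" for z
      using mult_left_mono[of 1 "1 + norm z" C] mult_right_mono[of 1 "1 + 4 * norm x" B]
        \<open>0 \<le> B\<close> \<open>0 \<le> C\<close> \<open>0 \<le> 4 * (norm x)\<^sup>2 / lam\<close> unfolding C_def by simp_all
    show "\<bar>?h z * ?u z $ i\<bar> \<le> C * (1 + norm z)" for z
      using abs_pair_prob_mult_le[of x b c "m + z" "?u z $ i"] abs_pair_center_nth_le[OF lam, of x m b c "m + z" i]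
        C_le(1) C_le(2)[of z] unfolding B_def by linarith
    show "\<bar>?h z * (?g z $ j * ?u z $ i - 2 / lam * ?cov z)\<bar> \<le> C * (1 + norm z)" for z
    proof -
      have "4 * norm x * B + 4 * (norm x)\<^sup>2 / lam \<le> C"
        using \<open>0 \<le> B\<close> by (simp add: C_def algebra_simps)
      then show ?thesis
        using abs_deriv_pair_prob_mult_center_nth_le[OF lam, of x b c "m + z" j m i] C_le(2)[of z]
        unfolding B_def by linarith
    qed
  qed measurable
  moreover have "(\<integral>z. ?h z * ?u z $ i * (m $ j + z \<bullet> axis j 1) \<partial>gauss_meas lam)
      = (\<integral>z. ?h z * ?u z $ i * (m + z) $ j \<partial>gauss_meas lam)"
    by (intro Bochner_Integration.integral_cong) (simp_all add: inner_axis)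
  moreover have "(\<integral>z. m $ j * (?h z * ?u z $ i) + ?h z * (?g z $ j * ?u z $ i - 2 / lam * ?cov z) / lam \<partial>gauss_meas lam)
      = (\<integral>z. hessian_low_rank lam x m b c (m + z) $ i $ j \<partial>gauss_meas lam)"
    using lam by (intro Bochner_Integration.integral_cong)
      (auto simp: hessian_low_rank_nth pair_center_def field_simps power2_eq_square)
  ultimately show ?thesis by simp
qed

lemma integral_pair_prob_second_moment:
  fixes x :: "real^'d^'k::finite" and m :: "real^'d"
  assumes lam: "lam > 0"
  shows "(\<integral>z. pair_prob x b c (m + z) * (m + z) $ i * (m + z) $ j \<partial>gauss_meas lam)
       = (\<integral>z. hessian_integrand lam x m b c (m + z) $ i $ j \<partial>gauss_meas lam)"
proof -
  let ?h = "\<lambda>z. pair_prob x b c (m + z)"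
  define \<delta> where "\<delta> = (if i = j then 1 / lam else 0)"
  have integrable_center: "integrable (gauss_meas lam)
      (\<lambda>z. ?h z * pair_center lam x m b c (m + z) $ i * (m + z) $ j)"
  proof (rule integrable_gauss_meas[OF lam, where n=1 and C="(norm m + 4 * norm x / lam) * (1 + norm m)"])
    show "norm (?h z * pair_center lam x m b c (m + z) $ i * (m + z) $ j)
        \<le> (norm m + 4 * norm x / lam) * (1 + norm m) * (1 + norm z) ^ 1" for z
    proof -
      have "\<bar>pair_center lam x m b c (m + z) $ i * (m + z) $ j\<bar> \<le> (norm m + 4 * norm x / lam) * ((1 + norm m) * (1 + norm z))"
        unfolding abs_mult using lam by (intro mult_mono abs_pair_center_nth_le abs_add_nth_le) auto
      then show ?thesis
        using abs_pair_prob_mult_le[of x b c "m + z" "pair_center lam x m b c (m + z) $ i * (m + z) $ j"]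
        by (simp add: mult.assoc)
    qed
  qed measurable
  have integrable_\<delta>: "integrable (gauss_meas lam) (\<lambda>z. \<delta> * ?h z)"
    by (intro integrable_mult_right) (rule integrable_pair_prob[OF lam])
  have "(\<integral>z. ?h z * (m + z) $ i * (m + z) $ j \<partial>gauss_meas lam)
      = (\<integral>z. ?h z * pair_center lam x m b c (m + z) $ i * (m + z) $ j + \<delta> * ?h z \<partial>gauss_meas lam)"
    unfolding \<delta>_def by (rule integral_pair_prob_nth_nth[OF lam])
  also have "\<dots> = (\<integral>z. ?h z * pair_center lam x m b c (m + z) $ i * (m + z) $ j \<partial>gauss_meas lam)
      + \<delta> * (\<integral>z. ?h z \<partial>gauss_meas lam)"
    using integrable_center integrable_\<delta> by simp
  also have "\<dots> = (\<integral>z. hessian_low_rank lam x m b c (m + z) $ i $ j \<partial>gauss_meas lam)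
      + \<delta> * (\<integral>z. ?h z \<partial>gauss_meas lam)"
    using integral_pair_prob_center_nth[OF lam, where x=x and m=m and b=b and c=c and i=i and j=j] by simp
  also have "\<dots> = (\<integral>z. hessian_low_rank lam x m b c (m + z) $ i $ j + \<delta> * ?h z \<partial>gauss_meas lam)"
    using Bochner_Integration.integral_add[OF integrable_hessian_low_rank_nth[OF lam, where x=x and m=m and b=b and c=c and i=i and j=j] integrable_\<delta>]
    by simp
  also have "\<dots> = (\<integral>z. hessian_integrand lam x m b c (m + z) $ i $ j \<partial>gauss_meas lam)"
    by (simp only: hessian_integrand_nth \<delta>_def)
  finally show ?thesis .
qed

section \<open>Derivatives of the population risk\<close>

definition Phi_partial ::
    "('k::finite \<Rightarrow> real) \<Rightarrow> ('k \<Rightarrow> real^'d) \<Rightarrow> real \<Rightarrow> 'k \<Rightarrow> 'd \<Rightarrow> real^'d^'k \<Rightarrow> real" where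
  "Phi_partial p mu lam c j y = (\<Sum>l\<in>UNIV. p l *
     (\<integral>z. (softmax y (mu l + z) c - (if l = c then 1 else 0)) * (mu l + z) $ j \<partial>gauss_meas lam))"

lemma abs_softmax_residual_mult_nth_le:
  "\<bar>(softmax y (m + z) c - (if l = c then 1 else 0)) * (m + z) $ j\<bar> \<le> (1 + norm m) * (1 + norm z)"
proof -
  have "\<bar>softmax y (m + z) c - (if l = c then 1 else 0)\<bar> \<le> 1"
    using softmax_nonneg[of y "m + z" c] softmax_le_1[of y "m + z" c] by auto
  then have "\<bar>softmax y (m + z) c - (if l = c then 1 else 0)\<bar> * \<bar>(m + z) $ j\<bar> \<le> \<bar>(m + z) $ j\<bar>"
    by (intro mult_left_le_one_le) auto
  then show ?thesis
    using abs_add_nth_le[of m z j] unfolding abs_mult by linarith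
qed

lemma integrable_loss_axis:
  fixes y :: "real^'d^'k::finite"
  assumes lam: "lam > 0"
  shows "integrable (gauss_meas lam) (\<lambda>z. loss y (axis l 1) (m + z))"
proof (rule integrable_gauss_meas[OF lam, where n=1 and C="ln CARD('k) + 2 * norm y * (1 + norm m)"])
  show "norm (loss y (axis l 1) (m + z)) \<le> (ln CARD('k) + 2 * norm y * (1 + norm m)) * (1 + norm z) ^ 1" for z
  proof -
    have "2 * norm y * norm (m + z) \<le> 2 * norm y * ((1 + norm m) * (1 + norm z))"
      by (intro mult_left_mono norm_add_le_mult) simp
    moreover have "ln CARD('k) \<le> ln CARD('k) * (1 + norm z)"
      using mult_left_mono[of 1 "1 + norm z" "ln CARD('k)"] by simp
    moreover have "(ln CARD('k) + 2 * norm y * (1 + norm m)) * (1 + norm z)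
        = ln CARD('k) * (1 + norm z) + 2 * norm y * ((1 + norm m) * (1 + norm z))"
      by (simp add: algebra_simps)
    ultimately show ?thesis
      using abs_loss_axis_le[of y l "m + z"] by simp
  qed
qed measurable

lemma DERIV_softmax_residual_coord:
  assumes "b \<noteq> c"
  shows "((\<lambda>t. (softmax (x + t *\<^sub>R coord b i) Y c - (if l = c then 1 else 0)) * Y $ j) has_real_derivative
      - (pair_prob x b c Y * Y $ i * Y $ j)) (at 0)"
proof -
  have "((\<lambda>t. softmax (x + t *\<^sub>R coord b i) Y c - (if l = c then 1 else 0)) has_real_derivative
      - (softmax x Y b * softmax x Y c * Y $ i) - 0) (at 0)"
    by (intro DERIV_diff DERIV_softmax_coord[OF assms] DERIV_const)
  from DERIV_cmult_right[OF this, of "Y $ j"] show ?thesis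
    by (simp add: pair_prob_def)
qed

lemma DERIV_Phi_coord:
  fixes p :: "'k::finite \<Rightarrow> real" and mu :: "'k \<Rightarrow> real^'d"
  assumes lam: "lam > 0"
  shows "((\<lambda>t. Phi p mu lam (y + t *\<^sub>R coord c j)) has_real_derivative Phi_partial p mu lam c j y) (at 0)"
  unfolding Phi_def Phi_partial_def
proof (intro DERIV_sum DERIV_cmult)
  fix l
  let ?v = "coord c j :: real^'d^'k"
  let ?f' = "\<lambda>y z. (softmax y (mu l + z) c - (if l = c then 1 else 0)) * (mu l + z) $ j"
  have "((\<lambda>t. \<integral>z. loss (y + t *\<^sub>R ?v) (axis l 1) (mu l + z) \<partial>gauss_meas lam) has_real_derivative
      (\<integral>z. ?f' (y + 0 *\<^sub>R ?v) z \<partial>gauss_meas lam)) (at 0)"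
  proof (rule DERIV_integral_dominated[where G="\<lambda>z. (1 + norm (mu l)) * (1 + norm z)"
        and f="\<lambda>t z. loss (y + t *\<^sub>R ?v) (axis l 1) (mu l + z)" and f'="\<lambda>t. ?f' (y + t *\<^sub>R ?v)"])
    show "((\<lambda>s. loss (y + s *\<^sub>R ?v) (axis l 1) (mu l + z)) has_real_derivative ?f' (y + t *\<^sub>R ?v) z) (at t)"
      for t z
      using DERIV_loss_coord
      by (rule DERIV_along_line[where f="\<lambda>y. loss y (axis l 1) (mu l + z)" and f'="\<lambda>y. ?f' y z"])
    show "integrable (gauss_meas lam) (\<lambda>z. (1 + norm (mu l)) * (1 + norm z))"
      by (rule integrable_gauss_meas[OF lam, where n=1 and C="1 + norm (mu l)"]) auto
    show "integrable (gauss_meas lam) (\<lambda>z. loss (y + 0 *\<^sub>R ?v) (axis l 1) (mu l + z))"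
      using integrable_loss_axis[OF lam] by simp
    show "\<bar>?f' (y + t *\<^sub>R ?v) z\<bar> \<le> (1 + norm (mu l)) * (1 + norm z)" for t z
      by (rule abs_softmax_residual_mult_nth_le)
  qed measurable
  then show "((\<lambda>t. \<integral>z. loss (y + t *\<^sub>R ?v) (axis l 1) (mu l + z) \<partial>gauss_meas lam) has_real_derivative
      (\<integral>z. ?f' y z \<partial>gauss_meas lam)) (at 0)"
    by simp
qed

lemma DERIV_Phi_partial_coord:
  fixes p :: "'k::finite \<Rightarrow> real" and mu :: "'k \<Rightarrow> real^'d"
  assumes lam: "lam > 0" and "b \<noteq> c"
  shows "((\<lambda>t. Phi_partial p mu lam c j (x + t *\<^sub>R coord b i)) has_real_derivative
      - (\<Sum>l\<in>UNIV. p l * (\<integral>z. pair_prob x b c (mu l + z) * (mu l + z) $ i * (mu l + z) $ j \<partial>gauss_meas lam)))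
      (at 0)"
proof -
  let ?v = "coord b i :: real^'d^'k"
  have "((\<lambda>t. Phi_partial p mu lam c j (x + t *\<^sub>R ?v)) has_real_derivative
      (\<Sum>l\<in>UNIV. p l * (\<integral>z. - (pair_prob x b c (mu l + z) * (mu l + z) $ i * (mu l + z) $ j) \<partial>gauss_meas lam)))
      (at 0)"
    unfolding Phi_partial_def
  proof (intro DERIV_sum DERIV_cmult)
    fix l
    let ?f = "\<lambda>y z. (softmax y (mu l + z) c - (if l = c then 1 else 0)) * (mu l + z) $ j"
    let ?f' = "\<lambda>y z. - (pair_prob y b c (mu l + z) * (mu l + z) $ i * (mu l + z) $ j)"
    have "((\<lambda>t. \<integral>z. ?f (x + t *\<^sub>R ?v) z \<partial>gauss_meas lam) has_real_derivative
        (\<integral>z. ?f' (x + 0 *\<^sub>R ?v) z \<partial>gauss_meas lam)) (at 0)"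
    proof (rule DERIV_integral_dominated[where G="\<lambda>z. (1 + norm (mu l))\<^sup>2 * (1 + norm z)\<^sup>2"
          and f="\<lambda>t. ?f (x + t *\<^sub>R ?v)" and f'="\<lambda>t. ?f' (x + t *\<^sub>R ?v)"])
      show "((\<lambda>s. ?f (x + s *\<^sub>R ?v) z) has_real_derivative ?f' (x + t *\<^sub>R ?v) z) (at t)" for t z
        using DERIV_softmax_residual_coord[OF \<open>b \<noteq> c\<close>]
        by (rule DERIV_along_line[where f="\<lambda>y. ?f y z" and f'="\<lambda>y. ?f' y z"])
      show "integrable (gauss_meas lam) (?f (x + 0 *\<^sub>R ?v))"
      proof (rule integrable_gauss_meas[OF lam, where n=1 and C="1 + norm (mu l)"])
        show "norm (?f (x + 0 *\<^sub>R ?v) z) \<le> (1 + norm (mu l)) * (1 + norm z) ^ 1" for z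
          using abs_softmax_residual_mult_nth_le[of "x + 0 *\<^sub>R ?v" "mu l" z c l j] by simp
      qed measurable
      show "integrable (gauss_meas lam) (\<lambda>z. (1 + norm (mu l))\<^sup>2 * (1 + norm z)\<^sup>2)"
        by (rule integrable_gauss_meas[OF lam, where n=2 and C="(1 + norm (mu l))\<^sup>2"]) auto
      show "\<bar>?f' (x + t *\<^sub>R ?v) z\<bar> \<le> (1 + norm (mu l))\<^sup>2 * (1 + norm z)\<^sup>2" for t z
        using abs_pair_prob_mult_nth_nth_le[of "x + t *\<^sub>R ?v" b c "mu l" z i j] by (simp add: mult.assoc)
    qed measurable
    then show "((\<lambda>t. \<integral>z. ?f (x + t *\<^sub>R ?v) z \<partial>gauss_meas lam) has_real_derivative
        (\<integral>z. ?f' x z \<partial>gauss_meas lam)) (at 0)"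
      by simp
  qed
  then show ?thesis by (simp add: sum_negf)
qed

lemma hessian_block_nth:
  fixes p :: "'k::finite \<Rightarrow> real" and mu :: "'k \<Rightarrow> real^'d" and x :: "real^'d^'k"
  assumes lam: "lam > 0"
  shows "(- (\<Sum>l\<in>UNIV. p l *\<^sub>R (\<integral>z. hessian_integrand lam x (mu l) b c (mu l + z) \<partial>gauss_meas lam))) $ i $ j
       = - (\<Sum>l\<in>UNIV. p l * (\<integral>z. pair_prob x b c (mu l + z) * (mu l + z) $ i * (mu l + z) $ j \<partial>gauss_meas lam))"
proof -
  have "(\<integral>z. hessian_integrand lam x (mu l) b c (mu l + z) \<partial>gauss_meas lam) $ i $ j
      = (\<integral>z. pair_prob x b c (mu l + z) * (mu l + z) $ i * (mu l + z) $ j \<partial>gauss_meas lam)" for l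
    using integral_nth_nth[OF integrable_hessian_integrand[OF lam, where x=x and m="mu l" and b=b and c=c]]
      integral_pair_prob_second_moment[OF lam, where x=x and m="mu l" and b=b and c=c and i=i and j=j]
    by simp
  then show ?thesis by (simp add: sum_component)
qed

lemma hessian_block_eq_low_rank_plus_identity:
  fixes p :: "'k::finite \<Rightarrow> real" and mu :: "'k \<Rightarrow> real^'d" and x :: "real^'d^'k"
  assumes lam: "lam > 0"
  shows "- (\<Sum>l\<in>UNIV. p l *\<^sub>R (\<integral>z. hessian_integrand lam x (mu l) b c (mu l + z) \<partial>gauss_meas lam))
       = - (\<Sum>l\<in>UNIV. p l *\<^sub>R (\<integral>z. hessian_low_rank lam x (mu l) b c (mu l + z) \<partial>gauss_meas lam))
         + (- (\<Sum>l\<in>UNIV. p l * (\<integral>z. pair_prob x b c (mu l + z) \<partial>gauss_meas lam)) / lam) *\<^sub>R mat 1"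
proof -
  have "(\<integral>z. hessian_integrand lam x (mu l) b c (mu l + z) \<partial>gauss_meas lam)
      = (\<integral>z. hessian_low_rank lam x (mu l) b c (mu l + z) \<partial>gauss_meas lam)
        + ((\<integral>z. pair_prob x b c (mu l + z) \<partial>gauss_meas lam) / lam) *\<^sub>R mat 1" for l
  proof -
    have "integrable (gauss_meas lam) (\<lambda>z. (pair_prob x b c (mu l + z) / lam) *\<^sub>R (mat 1 :: real^'d^'d))"
      using integrable_pair_prob[OF lam] by (intro integrable_scaleR_left integrable_divide_zero)
    with integrable_hessian_low_rank[OF lam, where x=x and m="mu l" and b=b and c=c]
      integrable_pair_prob[OF lam, where x=x and m="mu l" and b=b and c=c] show ?thesis
      unfolding hessian_integrand_eq_low_rank by simp
  qed
  then show ?thesis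
    by (simp add: scaleR_add_right sum.distrib scaleR_sum_left sum_divide_distrib)
qed

lemma rank_hessian_low_rank_sum:
  fixes p :: "'k::finite \<Rightarrow> real" and mu :: "'k \<Rightarrow> real^'d" and x :: "real^'d^'k"
  assumes lam: "lam > 0"
  shows "rank (- (\<Sum>l\<in>UNIV. p l *\<^sub>R (\<integral>z. hessian_low_rank lam x (mu l) b c (mu l + z) \<partial>gauss_meas lam)))
      \<le> 2 * CARD('k)"
proof -
  let ?S = "range mu \<union> range (\<lambda>a. x $ a)"
  have "rank (- (\<Sum>l\<in>UNIV. p l *\<^sub>R (\<integral>z. hessian_low_rank lam x (mu l) b c (mu l + z) \<partial>gauss_meas lam)))
      \<le> card ?S"
  proof (rule rank_le_card_if_orthogonal_in_null_space)
    fix w assume "\<And>s. s \<in> ?S \<Longrightarrow> s \<bullet> w = 0"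
    then have orth: "mu l \<bullet> w = 0" "x $ a \<bullet> w = 0" for l a by auto
    have lin: "linear (\<lambda>A::real^'d^'d. A *v w)"
      by (rule bounded_linear.linear[OF bounded_linear_mult_vec_left])
    have "(\<integral>z. hessian_low_rank lam x (mu l) b c (mu l + z) \<partial>gauss_meas lam) *v w = 0" for l
      using integral_mult_vec[OF integrable_hessian_low_rank[OF lam, where x=x and m="mu l" and b=b and c=c]]
      by (simp add: hessian_low_rank_mult_vec_eq_0 orth)
    then show "(- (\<Sum>l\<in>UNIV. p l *\<^sub>R (\<integral>z. hessian_low_rank lam x (mu l) b c (mu l + z) \<partial>gauss_meas lam))) *v w = 0"
      by (simp add: linear_neg[OF lin] linear_sum[OF lin] linear_scale[OF lin])
  qed simp
  also have "card ?S \<le> 2 * CARD('k)"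
    using card_Un_le[of "range mu" "range (\<lambda>a. x $ a)"] card_image_le[of UNIV mu]
      card_image_le[of UNIV "\<lambda>a. x $ a"] by simp
  finally show ?thesis .
qed

theorem lemma3p1:
  fixes p :: "'k::finite \<Rightarrow> real" and mu :: "'k \<Rightarrow> real^'d::finite"
    and lam :: real and x :: "real^'d^'k" and b c :: 'k
  assumes p_pos: "\<forall>l. 0 < p l \<and> p l < 1"
    and p_sum: "(\<Sum>l\<in>UNIV. p l) = 1"
    and lam_pos: "lam > 0"
    and bc: "b \<noteq> c"
  defines "H \<equiv> - (\<Sum>l\<in>UNIV. p l *\<^sub>R
      (\<integral>z. (let Y = mu l + z in
          (softmax x Y b * softmax x Y c) *\<^sub>R
            (outer (mu l + (1 / lam) *\<^sub>R (x $ b + x $ c - 2 *\<^sub>R gibbs_mean x Y))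
                   (mu l + (1 / lam) *\<^sub>R (x $ b + x $ c - 2 *\<^sub>R gibbs_mean x Y))
             + (1 / lam) *\<^sub>R mat 1
             - (2 / lam\<^sup>2) *\<^sub>R gibbs_cov x Y))
        \<partial>gauss_meas lam))"
  shows "(\<forall>i j. \<exists>g. (\<forall>y. ((\<lambda>t. Phi p mu lam (y + t *\<^sub>R coord c j)) has_real_derivative g y) (at 0))
              \<and> ((\<lambda>t. g (x + t *\<^sub>R coord b i)) has_real_derivative H $ i $ j) (at 0))
         \<and> (\<exists>(\<alpha>::real) (M::real^'d^'d). H = M + \<alpha> *\<^sub>R mat 1 \<and> rank M \<le> CARD('k)\<^sup>2)"
proof -
  have H_eq: "H = - (\<Sum>l\<in>UNIV. p l *\<^sub>R (\<integral>z. hessian_integrand lam x (mu l) b c (mu l + z) \<partial>gauss_meas lam))"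
    by (simp add: H_def hessian_integrand_def pair_prob_def pair_center_def pair_log_grad_def Let_def)
  have "\<forall>i j. \<exists>g. (\<forall>y. ((\<lambda>t. Phi p mu lam (y + t *\<^sub>R coord c j)) has_real_derivative g y) (at 0))
      \<and> ((\<lambda>t. g (x + t *\<^sub>R coord b i)) has_real_derivative H $ i $ j) (at 0)"
    using DERIV_Phi_coord[OF lam_pos] DERIV_Phi_partial_coord[OF lam_pos bc]
    unfolding H_eq hessian_block_nth[OF lam_pos]
    by (intro allI exI[where x="Phi_partial p mu lam c _"] conjI) simp_all
  moreover have "2 * CARD('k) \<le> CARD('k)\<^sup>2"
  proof -
    have "2 \<le> CARD('k)" using bc card_mono[of UNIV "{b, c}"] by simp
    then show ?thesis by (simp add: power2_eq_square)
  qed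
  then have "\<exists>(\<alpha>::real) (M::real^'d^'d). H = M + \<alpha> *\<^sub>R mat 1 \<and> rank M \<le> CARD('k)\<^sup>2"
    using H_eq hessian_block_eq_low_rank_plus_identity[OF lam_pos]
      order_trans[OF rank_hessian_low_rank_sum[OF lam_pos]] by blast
  ultimately show ?thesis by blast
qed

end
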